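(* The local complexity of the class of subgraphs of the square grid is $\Theta(n)$, and the local complexity of the class of induced subgraphs of the square grid is $\Theta(n)$.
   Context: The square grid is the infinite graph on $\mathbb{Z}^2$ with edges between points at Euclidean distance 1. All graphs are finite, simple, connected; $n$ is the number of vertices, with distinct identifiers in $\{1,\dots,\mathrm{poly}(n)\}$. A proof labeling scheme for a class $\mathcal{G}$ consists of a prover assigning a certificate (binary word) to each vertex of each $G\in\mathcal{G}$ and a local verifier where each vertex accepts or rejects based only on identifiers and certificates in its closed neighborhood; all vertices accept when $G\in\mathcal{G}$ with the prover's certificates, and when $G\notin\mathcal{G}$ some vertex rejects for every certificate assignment. The local complexity of $\mathcal{G}$ is the minimum, over such schemes, of the maximum certificate length used on $n$-vertex graphs of $\mathcal{G}$. *)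

theory Defs
  imports Main "HOL-Library.Landau_Symbols"
begin

definition grid_adj :: "int \<times> int \<Rightarrow> int \<times> int \<Rightarrow> bool" where
  "grid_adj p q \<longleftrightarrow> \<bar>fst p - fst q\<bar> + \<bar>snd p - snd q\<bar> = 1"

text \<open>A graph is given by its vertex set V (each vertex is its own identifier,
  hence identifiers are distinct) and a symmetric irreflexive edge relation E.\<close>
definition simple_graph :: "nat set \<Rightarrow> (nat \<Rightarrow> nat \<Rightarrow> bool) \<Rightarrow> bool" where
  "simple_graph V E \<longleftrightarrow> finite V \<and> V \<noteq> {} \<and>
     (\<forall>u v. E u v \<longrightarrow> u \<in> V \<and> v \<in> V) \<and>
     (\<forall>u v. E u v \<longrightarrow> E v u) \<and> (\<forall>v. \<not> E v v)"

definition connected_graph :: "nat set \<Rightarrow> (nat \<Rightarrow> nat \<Rightarrow> bool) \<Rightarrow> bool" where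
  "connected_graph V E \<longleftrightarrow> (\<forall>u\<in>V. \<forall>v\<in>V. (u, v) \<in> {(x, y). E x y}\<^sup>*)"

text \<open>Identifiers lie in {1..n^c}, where n is the number of vertices (poly(n) = n^c).\<close>
definition admissible :: "nat \<Rightarrow> nat set \<Rightarrow> (nat \<Rightarrow> nat \<Rightarrow> bool) \<Rightarrow> bool" where
  "admissible c V E \<longleftrightarrow> simple_graph V E \<and> connected_graph V E \<and> V \<subseteq> {1..card V ^ c}"

definition grid_subgraph :: "nat set \<Rightarrow> (nat \<Rightarrow> nat \<Rightarrow> bool) \<Rightarrow> bool" where
  "grid_subgraph V E \<longleftrightarrow>
     (\<exists>f :: nat \<Rightarrow> int \<times> int. inj_on f V \<and> (\<forall>u\<in>V. \<forall>v\<in>V. E u v \<longrightarrow> grid_adj (f u) (f v)))"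

definition grid_induced_subgraph :: "nat set \<Rightarrow> (nat \<Rightarrow> nat \<Rightarrow> bool) \<Rightarrow> bool" where
  "grid_induced_subgraph V E \<longleftrightarrow>
     (\<exists>f :: nat \<Rightarrow> int \<times> int. inj_on f V \<and> (\<forall>u\<in>V. \<forall>v\<in>V. E u v \<longleftrightarrow> grid_adj (f u) (f v)))"

text \<open>Local view of v: its identifier and certificate, plus identifiers and certificates
  of its neighbours (closed neighbourhood).\<close>
type_synonym view = "nat \<times> bool list \<times> (nat \<times> bool list) set"

definition local_view :: "(nat \<Rightarrow> nat \<Rightarrow> bool) \<Rightarrow> (nat \<Rightarrow> bool list) \<Rightarrow> nat \<Rightarrow> view" where
  "local_view E cert v = (v, cert v, {(u, cert u) | u. E v u})"

definition all_accept :: "(view \<Rightarrow> bool) \<Rightarrow> nat set \<Rightarrow> (nat \<Rightarrow> nat \<Rightarrow> bool) \<Rightarrow> (nat \<Rightarrow> bool list) \<Rightarrow> bool" where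
  "all_accept A V E cert \<longleftrightarrow> (\<forall>v\<in>V. A (local_view E cert v))"

definition is_pls :: "nat \<Rightarrow> (nat set \<Rightarrow> (nat \<Rightarrow> nat \<Rightarrow> bool) \<Rightarrow> bool) \<Rightarrow> (view \<Rightarrow> bool) \<Rightarrow> bool" where
  "is_pls c C A \<longleftrightarrow>
     (\<forall>V E. admissible c V E \<and> C V E \<longrightarrow> (\<exists>cert. all_accept A V E cert)) \<and>
     (\<forall>V E. admissible c V E \<and> \<not> C V E \<longrightarrow> (\<forall>cert. \<not> all_accept A V E cert))"

definition local_complexity :: "nat \<Rightarrow> (nat set \<Rightarrow> (nat \<Rightarrow> nat \<Rightarrow> bool) \<Rightarrow> bool) \<Rightarrow> nat \<Rightarrow> nat" where
  "local_complexity c C n = (LEAST k. \<exists>A. is_pls c C A \<and>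
     (\<forall>V E. admissible c V E \<and> C V E \<and> card V = n \<longrightarrow>
        (\<exists>cert. all_accept A V E cert \<and> (\<forall>v\<in>V. length (cert v) \<le> k))))"

end

theory Submission
  imports Defs "HOL-Library.FuncSet" "HOL-Library.Product_Plus"
begin

text \<open>
  Upper bound. Fix an embedding of the graph into the grid and a walk of length \<open>< 2n\<close> through
  all vertices. Every certificate contains the walk as a list of unit steps, the identifier of its
  first vertex and the owner's index on the walk: \<open>O(n)\<close> bits. A vertex checks that its
  neighbours carry the same walk and sit at adjacent grid points, that distinct neighbours sit at
  distinct points, that the point preceding its own on the walk is occupied by a neighbour, and that
  it is the first vertex if it sits at the origin. By induction along the walk at most one vertex
  sits at each point, so the positions form an embedding; for induced subgraphs a vertex also checks
  that every occupied grid neighbour of its point is a neighbour.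

  Lower bound. For \<open>x, y \<in> {0,1}\<^sup>m\<close> take a \<open>2 \<times> 7\<close> column joining two ladders of
  length \<open>4m\<close>, and attach for every \<open>i\<close> a \<open>2 \<times> 2\<close> block to each ladder, on the side chosen by
  \<open>x i\<close> resp. \<open>y i\<close>. Ladders are rigid in the grid, so the graph embeds iff \<open>x\<close> and \<open>y\<close> are
  disjoint, and then even as an induced subgraph. The lower and the upper half only meet in 16
  vertices around the column. If all certificates had fewer than \<open>m/16 - 1\<close> bits, two instances
  \<open>(x, \<not>x)\<close> and \<open>(x', \<not>x')\<close> with \<open>x \<noteq> x'\<close> would carry the same certificates there, and
  gluing the lower half of one to the upper half of the other would give an accepted graph with
  \<open>x i \<and> \<not> x' i\<close> for some \<open>i\<close>, which is not a grid subgraph.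
\<close>

definition grid_unit :: "int \<times> int \<Rightarrow> bool" where
  "grid_unit d \<longleftrightarrow> \<bar>fst d\<bar> + \<bar>snd d\<bar> = 1"

lemma grid_adj_iff_unit: "grid_adj p q \<longleftrightarrow> grid_unit (q - p)"
  by (simp add: grid_adj_def grid_unit_def abs_minus_commute)

lemma grid_unit_cases: "grid_unit d \<Longrightarrow> d = (1, 0) \<or> d = (-1, 0) \<or> d = (0, 1) \<or> d = (0, -1)"
  by (cases d) (auto simp: grid_unit_def abs_if split: if_splits)

lemma grid_adj_sym: "grid_adj p q \<Longrightarrow> grid_adj q p"
  by (simp add: grid_adj_def abs_minus_commute)

lemma grid_adj_irrefl: "\<not> grid_adj p p"
  by (simp add: grid_adj_def)

lemma grid_adj_diff_right [simp]: "grid_adj (p - c) (q - c) \<longleftrightarrow> grid_adj p q"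
  by (simp add: grid_adj_def)

fun bits_of_nat :: "nat \<Rightarrow> bool list" where
  "bits_of_nat n = (if n = 0 then [] else odd n # bits_of_nat (n div 2))"

declare bits_of_nat.simps [simp del]

lemma bits_of_nat_0 [simp]: "bits_of_nat 0 = []"
  and bits_of_nat_pos: "n > 0 \<Longrightarrow> bits_of_nat n = odd n # bits_of_nat (n div 2)"
  by (simp_all add: bits_of_nat.simps)

lemma bits_of_nat_inj: "bits_of_nat n = bits_of_nat m \<Longrightarrow> n = m"
proof (induction n arbitrary: m rule: bits_of_nat.induct)
  case (1 n)
  show ?case
  proof (cases "n = 0 \<or> m = 0")
    case True
    then show ?thesis using "1.prems" by (metis bits_of_nat_0 bits_of_nat_pos list.distinct(1) neq0_conv)
  next
    case False
    then have "odd n = odd m" "n div 2 = m div 2"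
      using 1 by (auto simp: bits_of_nat_pos)
    then show ?thesis by (metis div_mult_mod_eq odd_iff_mod_2_eq_one parity_cases)
  qed
qed

lemma length_bits_of_nat_le: "n < 2 ^ k \<Longrightarrow> length (bits_of_nat n) \<le> k"
proof (induction k arbitrary: n)
  case 0
  then show ?case by simp
next
  case (Suc k)
  then show ?case by (cases "n = 0") (auto simp: bits_of_nat_pos)
qed

fun prefix_code :: "bool list \<Rightarrow> bool list" where
  "prefix_code [] = [False]"
| "prefix_code (b # bs) = True # b # prefix_code bs"

lemma prefix_code_append_eq:
  "prefix_code xs @ ys = prefix_code xs' @ ys' \<Longrightarrow> xs = xs' \<and> ys = ys'"
proof (induction xs arbitrary: xs')
  case Nil
  then show ?case by (cases xs') auto
next
  case (Cons a xs)
  then show ?case by (cases xs') auto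
qed

lemma length_prefix_code [simp]: "length (prefix_code xs) = 2 * length xs + 1"
  by (induction xs) auto

definition step_vec :: "bool \<times> bool \<Rightarrow> int \<times> int" where
  "step_vec d = (if fst d then (0, if snd d then -1 else 1) else (if snd d then -1 else 1, 0))"

definition step_code :: "int \<times> int \<Rightarrow> bool \<times> bool" where
  "step_code d = (fst d = 0, if fst d = 0 then snd d = -1 else fst d = -1)"

lemma step_vec_step_code: "grid_unit d \<Longrightarrow> step_vec (step_code d) = d"
  by (auto dest!: grid_unit_cases simp: step_vec_def step_code_def)

definition walk_pos :: "(bool \<times> bool) list \<Rightarrow> nat \<Rightarrow> int \<times> int" where
  "walk_pos W i = (\<Sum>k<i. step_vec (W ! k))"

lemma walk_pos_0 [simp]: "walk_pos W 0 = 0"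
  and walk_pos_Suc [simp]: "walk_pos W (Suc i) = walk_pos W i + step_vec (W ! i)"
  by (simp_all add: walk_pos_def)

definition steps_bits :: "(bool \<times> bool) list \<Rightarrow> bool list" where
  "steps_bits W = concat (map (\<lambda>(a, b). [a, b]) W)"

lemma length_steps_bits [simp]: "length (steps_bits W) = 2 * length W"
  unfolding steps_bits_def by (induction W) auto

lemma steps_bits_inj: "steps_bits W = steps_bits W' \<Longrightarrow> W = W'"
proof (induction W arbitrary: W')
  case Nil
  then show ?case by (cases W') (auto simp: steps_bits_def)
next
  case (Cons a W)
  then show ?case by (cases W') (auto simp: steps_bits_def split: prod.splits)
qed

definition walk_cert :: "(bool \<times> bool) list \<Rightarrow> nat \<Rightarrow> nat \<Rightarrow> bool list" where
  "walk_cert W r j = prefix_code (steps_bits W) @ prefix_code (bits_of_nat r) @ prefix_code (bits_of_nat j)"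

lemma walk_cert_inj: "walk_cert W r j = walk_cert W' r' j' \<Longrightarrow> W = W' \<and> r = r' \<and> j = j'"
  unfolding walk_cert_def by (metis append_Nil2 bits_of_nat_inj prefix_code_append_eq steps_bits_inj)

lemma length_walk_cert:
  "length (walk_cert W r j) = 4 * length W + 2 * length (bits_of_nat r) + 2 * length (bits_of_nat j) + 3"
  by (simp add: walk_cert_def)

section \<open>The walk scheme\<close>

definition positioned_nbrs ::
    "(bool \<times> bool) list \<Rightarrow> nat \<Rightarrow> (nat \<times> bool list) set \<Rightarrow> (nat \<times> (int \<times> int)) set" where
  "positioned_nbrs W r N = {(u, walk_pos W j) | u j. (u, walk_cert W r j) \<in> N}"

definition walk_view_ok :: "bool \<Rightarrow> (bool \<times> bool) list \<Rightarrow> nat \<Rightarrow> nat \<Rightarrow> view \<Rightarrow> bool" where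
  "walk_view_ok ind W r j vw \<longleftrightarrow>
     (case vw of (v, cv, N) \<Rightarrow>
       cv = walk_cert W r j \<and> j \<le> length W \<and>
       (\<forall>(u, cu)\<in>N. \<exists>j'\<le>length W. cu = walk_cert W r j') \<and>
       (\<forall>(u, q)\<in>positioned_nbrs W r N. grid_adj (walk_pos W j) q) \<and>
       (\<forall>(u, q)\<in>positioned_nbrs W r N. \<forall>(u', q')\<in>positioned_nbrs W r N. q = q' \<longrightarrow> u = u') \<and>
       (\<forall>i<length W. walk_pos W (Suc i) = walk_pos W j \<longrightarrow>
          walk_pos W i \<in> snd ` positioned_nbrs W r N) \<and>
       (walk_pos W j = 0 \<longrightarrow> v = r) \<and>
       (ind \<longrightarrow> (\<forall>i\<le>length W. grid_adj (walk_pos W j) (walk_pos W i) \<longrightarrow>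
          walk_pos W i \<in> snd ` positioned_nbrs W r N)))"

definition walk_verifier :: "bool \<Rightarrow> view \<Rightarrow> bool" where
  "walk_verifier ind vw \<longleftrightarrow> (\<exists>W r j. walk_view_ok ind W r j vw)"

definition walk_consistent_at ::
    "bool \<Rightarrow> (nat \<Rightarrow> nat \<Rightarrow> bool) \<Rightarrow> (bool \<times> bool) list \<Rightarrow> nat \<Rightarrow> (nat \<Rightarrow> nat) \<Rightarrow> nat \<Rightarrow> bool" where
  "walk_consistent_at ind E W r idx v \<longleftrightarrow>
     (\<forall>u. E v u \<longrightarrow> grid_adj (walk_pos W (idx v)) (walk_pos W (idx u))) \<and>
     (\<forall>u u'. E v u \<longrightarrow> E v u' \<longrightarrow> walk_pos W (idx u) = walk_pos W (idx u') \<longrightarrow> u = u') \<and>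
     (\<forall>i<length W. walk_pos W (Suc i) = walk_pos W (idx v) \<longrightarrow>
        (\<exists>u. E v u \<and> walk_pos W (idx u) = walk_pos W i)) \<and>
     (walk_pos W (idx v) = 0 \<longrightarrow> v = r) \<and>
     (ind \<longrightarrow> (\<forall>i\<le>length W. grid_adj (walk_pos W (idx v)) (walk_pos W i) \<longrightarrow>
        (\<exists>u. E v u \<and> walk_pos W (idx u) = walk_pos W i)))"

lemma walk_view_ok_local_view_iff:
  assumes nbrs: "\<And>u. E v u \<Longrightarrow> cert u = walk_cert W r (idx u) \<and> idx u \<le> length W"
    and self: "cert v = walk_cert W r (idx v)" "idx v \<le> length W"
  shows "walk_view_ok ind W r (idx v) (local_view E cert v) \<longleftrightarrow> walk_consistent_at ind E W r idx v"
proof -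
  have "positioned_nbrs W r {(u, cert u) | u. E v u} = {(u, walk_pos W (idx u)) | u. E v u}"
    using nbrs by (auto simp: positioned_nbrs_def dest: walk_cert_inj)
  moreover have "snd ` {(u, walk_pos W (idx u)) | u. E v u} = {walk_pos W (idx u) | u. E v u}"
    by force
  moreover have "\<forall>(u, cu)\<in>{(u, cert u) | u. E v u}. \<exists>j'\<le>length W. cu = walk_cert W r j'"
    using nbrs by auto
  ultimately show ?thesis
    using self unfolding walk_view_ok_def walk_consistent_at_def local_view_def
    by (simp del: walk_pos_Suc) (intro conj_cong refl; metis)
qed

lemma connected_graph_constant:
  assumes "connected_graph V E" "u \<in> V" "v \<in> V" and "\<And>a b. E a b \<Longrightarrow> F a = F b"
  shows "F u = F v"
proof -
  have "(u, v) \<in> {(a, b). E a b}\<^sup>*"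
    using assms(1-3) by (simp add: connected_graph_def)
  then show ?thesis
    by induction (auto dest: assms(4))
qed

lemma accepted_walk_certs:
  assumes graph: "simple_graph V E" "connected_graph V E"
    and acc: "all_accept (walk_verifier ind) V E cert"
  obtains W r idx where "\<And>v. v \<in> V \<Longrightarrow>
    cert v = walk_cert W r (idx v) \<and> idx v \<le> length W \<and> walk_consistent_at ind E W r idx v"
proof -
  have "\<forall>v\<in>V. \<exists>t. walk_view_ok ind (fst t) (fst (snd t)) (snd (snd t)) (local_view E cert v)"
    using acc by (auto simp: all_accept_def walk_verifier_def)
  then obtain t where t: "\<And>v. v \<in> V \<Longrightarrow>
      walk_view_ok ind (fst (t v)) (fst (snd (t v))) (snd (snd (t v))) (local_view E cert v)"
    by (metis bchoice)
  define idx where "idx v = snd (snd (t v))" for v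
  have EV: "\<And>u v. E u v \<Longrightarrow> u \<in> V \<and> v \<in> V"
    using graph(1) by (auto simp: simple_graph_def)
  have own: "cert v = walk_cert (fst (t v)) (fst (snd (t v))) (idx v)" if "v \<in> V" for v
    using t[OF that] by (simp add: walk_view_ok_def local_view_def idx_def)
  have agree: "fst (t u) = fst (t v) \<and> fst (snd (t u)) = fst (snd (t v))" if e: "E u v" for u v
  proof -
    obtain j where "cert v = walk_cert (fst (t u)) (fst (snd (t u))) j"
      using t[of u] EV[OF e] e by (auto simp: walk_view_ok_def local_view_def)
    then show ?thesis
      using own[of v] EV[OF e] by (metis walk_cert_inj)
  qed
  obtain v0 where v0: "v0 \<in> V"
    using graph(1) by (auto simp: simple_graph_def)
  define W where "W = fst (t v0)"
  define r where "r = fst (snd (t v0))"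
  have common: "fst (t v) = W \<and> fst (snd (t v)) = r" if "v \<in> V" for v
    using connected_graph_constant[OF graph(2) that v0, of "\<lambda>v. (fst (t v), fst (snd (t v)))"] agree
    by (simp add: W_def r_def)
  have certs: "cert v = walk_cert W r (idx v) \<and> idx v \<le> length W" if "v \<in> V" for v
    using own[OF that] t[OF that] common[OF that] by (simp add: walk_view_ok_def local_view_def idx_def)
  have "walk_consistent_at ind E W r idx v" if "v \<in> V" for v
    using t[OF that] common[OF that] certs that EV
    by (subst walk_view_ok_local_view_iff[symmetric]) (auto simp: idx_def)
  then show ?thesis
    using that certs by blast
qed

lemma walk_positions_inj:
  fixes pos :: "'a \<Rightarrow> 'b" and P :: "nat \<Rightarrow> 'b"
  assumes on_walk: "\<And>v. v \<in> V \<Longrightarrow> \<exists>i\<le>L. pos v = P i"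
    and root: "\<And>v v'. v \<in> V \<Longrightarrow> v' \<in> V \<Longrightarrow> pos v = P 0 \<Longrightarrow> pos v' = P 0 \<Longrightarrow> v = v'"
    and predecessor: "\<And>v i. v \<in> V \<Longrightarrow> i < L \<Longrightarrow> pos v = P (Suc i) \<Longrightarrow> \<exists>u\<in>V. E u v \<and> pos u = P i"
    and nbrs_inj: "\<And>u v v'. E u v \<Longrightarrow> E u v' \<Longrightarrow> pos v = pos v' \<Longrightarrow> v = v'"
  shows "inj_on pos V"
proof -
  have "\<forall>v\<in>V. \<forall>v'\<in>V. pos v = P i \<longrightarrow> pos v' = P i \<longrightarrow> v = v'" if "i \<le> L" for i
    using that
  proof (induction i)
    case 0
    then show ?case using root by blast
  next
    case (Suc i)
    show ?case
    proof (intro ballI impI)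
      fix v v' assume "v \<in> V" "v' \<in> V" "pos v = P (Suc i)" "pos v' = P (Suc i)"
      moreover obtain u u' where "u \<in> V" "E u v" "pos u = P i" "u' \<in> V" "E u' v'" "pos u' = P i"
        using predecessor Suc.prems calculation by (metis Suc_le_lessD)
      ultimately show "v = v'"
        using Suc nbrs_inj by (metis Suc_leD)
    qed
  qed
  then show ?thesis
    using on_walk by (metis inj_onI)
qed

lemma walk_consistent_imp_grid_subgraph:
  assumes graph: "simple_graph V E"
    and consistent: "\<And>v. v \<in> V \<Longrightarrow> idx v \<le> length W \<and> walk_consistent_at ind E W r idx v"
  shows "grid_subgraph V E \<and> (ind \<longrightarrow> grid_induced_subgraph V E)"
proof -
  define pos where "pos v = walk_pos W (idx v)" for v
  have EV: "\<And>u v. E u v \<Longrightarrow> u \<in> V \<and> v \<in> V" and sym: "\<And>u v. E u v \<Longrightarrow> E v u"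
    using graph by (auto simp: simple_graph_def)
  have adj: "grid_adj (pos u) (pos v)" if "E u v" for u v
    using consistent[of u] EV[OF that] that by (simp add: walk_consistent_at_def pos_def)
  have inj: "inj_on pos V"
  proof (rule walk_positions_inj[where P = "walk_pos W" and L = "length W" and E = E])
    show "\<And>v. v \<in> V \<Longrightarrow> \<exists>i\<le>length W. pos v = walk_pos W i"
      using consistent pos_def by blast
    show "v = v'" if "v \<in> V" "v' \<in> V" "pos v = walk_pos W 0" "pos v' = walk_pos W 0" for v v'
      using consistent[OF that(1)] consistent[OF that(2)] that(3,4)
      by (simp add: walk_consistent_at_def pos_def)
    show "\<exists>u\<in>V. E u v \<and> pos u = walk_pos W i"
      if "v \<in> V" "i < length W" "pos v = walk_pos W (Suc i)" for v i
      using consistent[OF that(1)] that(2,3) EV sym unfolding walk_consistent_at_def pos_def by metis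
    show "v = v'" if "E u v" "E u v'" "pos v = pos v'" for u v v'
      using consistent[of u] EV that by (simp add: walk_consistent_at_def pos_def)
  qed
  have "E u v" if "ind" and u: "u \<in> V" and v: "v \<in> V" and "grid_adj (pos u) (pos v)" for u v
  proof -
    obtain w where "E u w" "pos w = pos v"
      using consistent[OF u] consistent[OF v] \<open>ind\<close> \<open>grid_adj (pos u) (pos v)\<close>
      unfolding walk_consistent_at_def pos_def by blast
    then show ?thesis
      using inj EV v by (metis inj_onD)
  qed
  then show ?thesis
    using inj adj EV unfolding grid_subgraph_def grid_induced_subgraph_def by blast
qed

lemma edge_leaving_set:
  assumes "(a, b) \<in> {(x, y). E x y}\<^sup>*" "a \<in> X" "b \<notin> X"
  shows "\<exists>x y. x \<in> X \<and> y \<notin> X \<and> E x y"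
  using assms by induction auto

lemma successively_detour:
  assumes "successively E (as @ x # bs)" "E x y" "E y x"
  shows "successively E (as @ x # y # x # bs)"
  using assms by (cases as rule: rev_cases; cases bs) (auto simp: successively_append_iff)

lemma covering_walk_exists:
  assumes graph: "simple_graph V E" "connected_graph V E" and v0: "v0 \<in> V"
  shows "\<exists>ws. successively E ws \<and> hd ws = v0 \<and> set ws = V \<and> length ws < 2 * card V"
proof -
  have fin: "finite V" and EV: "\<And>u v. E u v \<Longrightarrow> u \<in> V \<and> v \<in> V"
    and sym: "\<And>u v. E u v \<Longrightarrow> E v u"
    using graph(1) by (auto simp: simple_graph_def)
  have "\<exists>ws. successively E ws \<and> hd ws = v0 \<and> set ws \<subseteq> V \<and> min t (card V) \<le> card (set ws)
      \<and> length ws < 2 * card (set ws)" for t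
  proof (induction t)
    case 0
    show ?case
      using v0 by (intro exI[of _ "[v0]"]) auto
  next
    case (Suc t)
    then obtain ws where ws: "successively E ws" "hd ws = v0" "set ws \<subseteq> V"
      "min t (card V) \<le> card (set ws)" "length ws < 2 * card (set ws)"
      by blast
    show ?case
    proof (cases "card (set ws) < card V")
      case False
      then show ?thesis using ws by auto
    next
      case True
      then obtain b where b: "b \<in> V" "b \<notin> set ws"
        using ws(3) by (metis less_irrefl subsetI subset_antisym)
      have ne: "ws \<noteq> []"
        using ws(5) by auto
      then have "(v0, b) \<in> {(x, y). E x y}\<^sup>*"
        using graph(2) v0 b by (simp add: connected_graph_def)
      then obtain x y where xy: "x \<in> set ws" "y \<notin> set ws" "E x y"
        using edge_leaving_set ws(2) ne b(2) by (metis hd_in_set)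
      then obtain as bs where split: "ws = as @ x # bs"
        by (metis split_list)
      define ws' where "ws' = as @ x # y # x # bs"
      have "successively E ws'"
        using successively_detour ws(1) xy(3) sym[OF xy(3)] by (simp add: ws'_def split)
      moreover have "hd ws' = v0"
        using ws(2) by (cases as) (auto simp: ws'_def split)
      moreover have "set ws' = insert y (set ws)" "length ws' = length ws + 2"
        by (auto simp: ws'_def split)
      ultimately show ?thesis
        using ws xy EV by (intro exI[of _ ws']) auto
    qed
  qed
  then obtain ws where ws: "successively E ws" "hd ws = v0" "set ws \<subseteq> V" "card V \<le> card (set ws)"
    "length ws < 2 * card (set ws)"
    by (metis min.idem)
  then have "set ws = V"
    using fin by (meson card_seteq)
  then show ?thesis
    using ws by auto
qed

definition embedded_steps :: "(nat \<Rightarrow> int \<times> int) \<Rightarrow> nat list \<Rightarrow> (bool \<times> bool) list" where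
  "embedded_steps f ws = map (\<lambda>i. step_code (f (ws ! Suc i) - f (ws ! i))) [0..<length ws - 1]"

lemma walk_pos_embedded_steps:
  assumes "successively E ws" and "\<And>u v. E u v \<Longrightarrow> grid_adj (f u) (f v)"
    and "i \<le> length (embedded_steps f ws)"
  shows "walk_pos (embedded_steps f ws) i = f (ws ! i) - f (ws ! 0)"
  using assms(3)
proof (induction i)
  case 0
  then show ?case by simp
next
  case (Suc i)
  then have "grid_unit (f (ws ! Suc i) - f (ws ! i))"
    using assms(1,2) successively_nth[OF assms(1), of i]
    by (simp add: embedded_steps_def grid_adj_iff_unit)
  then show ?case
    using Suc by (simp add: embedded_steps_def step_vec_step_code)
qed

lemma embedding_walk_consistent:
  assumes graph: "simple_graph V E"
    and inj: "inj_on f V" and adj: "\<And>u v. E u v \<Longrightarrow> grid_adj (f u) (f v)"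
    and induced: "\<And>u v. ind \<Longrightarrow> u \<in> V \<Longrightarrow> v \<in> V \<Longrightarrow> grid_adj (f u) (f v) \<Longrightarrow> E u v"
    and walk: "successively E ws" "set ws = V"
    and idx: "\<And>v. v \<in> V \<Longrightarrow> idx v < length ws \<and> ws ! idx v = v"
    and v: "v \<in> V"
  shows "walk_consistent_at ind E (embedded_steps f ws) (hd ws) idx v"
proof -
  define W where "W = embedded_steps f ws"
  have ne: "ws \<noteq> []"
    using walk(2) v by auto
  have EV: "\<And>u v. E u v \<Longrightarrow> u \<in> V \<and> v \<in> V" and sym: "\<And>u v. E u v \<Longrightarrow> E v u"
    using graph by (auto simp: simple_graph_def)
  have lenW: "length W = length ws - 1"
    by (simp add: W_def embedded_steps_def)
  have onV: "ws ! i \<in> V" if "i \<le> length W" for i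
    using that ne walk(2) lenW by (metis One_nat_def Suc_pred le_imp_less_Suc length_greater_0_conv nth_mem)
  have pos: "walk_pos W i = f (ws ! i) - f (hd ws)" if "i \<le> length W" for i
    using walk_pos_embedded_steps[OF walk(1) adj] that ne by (simp add: W_def hd_conv_nth)
  have pos_idx: "walk_pos W (idx u) = f u - f (hd ws)" if "u \<in> V" for u
    using pos[of "idx u"] idx[OF that] lenW by fastforce
  have f_eq: "u = u'" if "u \<in> V" "u' \<in> V" "f u - c = f u' - c" for u u' c
    using inj that by (simp add: inj_on_eq_iff)
  have "\<exists>u. E v u \<and> walk_pos W (idx u) = walk_pos W i"
    if "i < length W" "walk_pos W (Suc i) = walk_pos W (idx v)" for i
  proof -
    have "ws ! Suc i = v"
      using that pos[of "Suc i"] pos_idx[OF v] onV[of "Suc i"] f_eq v by simp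
    then have "E v (ws ! i)"
      using successively_nth[OF walk(1), of i] that(1) lenW sym by auto
    then show ?thesis
      using pos_idx pos that(1) EV by auto
  qed
  moreover have "\<exists>u. E v u \<and> walk_pos W (idx u) = walk_pos W i"
    if "ind" "i \<le> length W" "grid_adj (walk_pos W (idx v)) (walk_pos W i)" for i
    using that induced[of v "ws ! i"] pos pos_idx onV v by (metis grid_adj_diff_right)
  moreover have "v = hd ws" if "walk_pos W (idx v) = 0"
    using that pos_idx[OF v] f_eq[of v "hd ws" 0] v hd_in_set[OF ne] walk(2) by simp
  ultimately show ?thesis
    using pos_idx EV adj f_eq unfolding walk_consistent_at_def W_def[symmetric] by auto
qed

lemma length_walk_cert_le:
  assumes "c \<ge> 1" "r \<le> n ^ c" "j < 2 * n" "length W + 2 \<le> 2 * n"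
  shows "length (walk_cert W r j) \<le> (12 + 2 * c) * n"
proof -
  have "n ^ c < (2 ^ n) ^ c"
    using assms(1) by (intro power_strict_mono) auto
  then have "r < (2 ^ n) ^ c"
    using assms(2) by linarith
  then have "length (bits_of_nat r) \<le> c * n"
    by (intro length_bits_of_nat_le) (simp add: power_mult[symmetric] mult.commute)
  moreover have "length (bits_of_nat j) \<le> 2 * n"
    using assms(3) by (intro length_bits_of_nat_le) (meson less_exp less_trans)
  ultimately show ?thesis
    using assms(4) by (simp add: length_walk_cert algebra_simps)
qed

definition grid_class :: "bool \<Rightarrow> nat set \<Rightarrow> (nat \<Rightarrow> nat \<Rightarrow> bool) \<Rightarrow> bool" where
  "grid_class ind = (if ind then grid_induced_subgraph else grid_subgraph)"

lemma grid_induced_subgraph_imp_grid_subgraph: "grid_induced_subgraph V E \<Longrightarrow> grid_subgraph V E"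
  unfolding grid_induced_subgraph_def grid_subgraph_def by blast

lemma grid_class_embedding:
  assumes "grid_class ind V E" and "simple_graph V E"
  obtains f where "inj_on f V" and "\<And>u v. E u v \<Longrightarrow> grid_adj (f u) (f v)"
    and "\<And>u v. ind \<Longrightarrow> u \<in> V \<Longrightarrow> v \<in> V \<Longrightarrow> grid_adj (f u) (f v) \<Longrightarrow> E u v"
proof -
  have EV: "\<And>u v. E u v \<Longrightarrow> u \<in> V \<and> v \<in> V"
    using assms(2) by (auto simp: simple_graph_def)
  obtain f where "inj_on f V" "\<forall>u\<in>V. \<forall>v\<in>V. E u v \<longrightarrow> grid_adj (f u) (f v)"
    "ind \<longrightarrow> (\<forall>u\<in>V. \<forall>v\<in>V. grid_adj (f u) (f v) \<longrightarrow> E u v)"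
    using assms(1) unfolding grid_class_def grid_subgraph_def grid_induced_subgraph_def
    by (cases ind) (simp_all, metis, blast)
  then show ?thesis
    using that EV by blast
qed

lemma walk_verifier_complete:
  assumes c: "c \<ge> 1" and adm: "admissible c V E" and member: "grid_class ind V E" and n: "card V = n"
  shows "\<exists>cert. all_accept (walk_verifier ind) V E cert \<and> (\<forall>v\<in>V. length (cert v) \<le> (12 + 2 * c) * n)"
proof -
  have graph: "simple_graph V E" "connected_graph V E" and ids: "V \<subseteq> {1..card V ^ c}"
    using adm by (auto simp: admissible_def)
  have EV: "\<And>u v. E u v \<Longrightarrow> u \<in> V \<and> v \<in> V"
    using graph(1) by (auto simp: simple_graph_def)
  obtain f where inj: "inj_on f V" and adj: "\<And>u v. E u v \<Longrightarrow> grid_adj (f u) (f v)"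
    and induced: "\<And>u v. ind \<Longrightarrow> u \<in> V \<Longrightarrow> v \<in> V \<Longrightarrow> grid_adj (f u) (f v) \<Longrightarrow> E u v"
    using grid_class_embedding[OF member graph(1)] by metis
  obtain v0 where v0: "v0 \<in> V"
    using graph(1) by (auto simp: simple_graph_def)
  obtain ws where walk: "successively E ws" "hd ws = v0" "set ws = V" "length ws < 2 * card V"
    using covering_walk_exists[OF graph v0] by blast
  have "\<forall>v\<in>V. \<exists>i. i < length ws \<and> ws ! i = v"
    using walk(3) by (auto simp: in_set_conv_nth)
  then obtain idx where idx: "\<And>v. v \<in> V \<Longrightarrow> idx v < length ws \<and> ws ! idx v = v"
    by metis
  define W where "W = embedded_steps f ws"
  define cert where "cert v = walk_cert W v0 (idx v)" for v
  have lenW: "length W + 1 = length ws"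
    using walk(3) v0 by (cases ws) (auto simp: W_def embedded_steps_def)
  have idx_le: "idx v \<le> length W" if "v \<in> V" for v
    using idx[OF that] lenW by linarith
  have "walk_view_ok ind W v0 (idx v) (local_view E cert v)" if "v \<in> V" for v
  proof (subst walk_view_ok_local_view_iff)
    show "walk_consistent_at ind E W v0 idx v"
      using embedding_walk_consistent[OF graph(1) inj adj induced walk(1,3) idx that]
      by (simp add: W_def walk(2))
  qed (use idx_le EV that in \<open>auto simp: cert_def\<close>)
  then have "all_accept (walk_verifier ind) V E cert"
    by (auto simp: all_accept_def walk_verifier_def)
  moreover have "length (cert v) \<le> (12 + 2 * c) * n" if "v \<in> V" for v
    unfolding cert_def
    using c ids v0 idx[OF that] walk(4) lenW n by (intro length_walk_cert_le) auto
  ultimately show ?thesis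
    by blast
qed

lemma walk_verifier_sound:
  assumes adm: "admissible c V E" and acc: "all_accept (walk_verifier ind) V E cert"
  shows "grid_class ind V E"
proof -
  have graph: "simple_graph V E" "connected_graph V E"
    using adm by (auto simp: admissible_def)
  obtain W r idx where "\<And>v. v \<in> V \<Longrightarrow> idx v \<le> length W \<and> walk_consistent_at ind E W r idx v"
    using accepted_walk_certs[OF graph acc] by metis
  then have "grid_subgraph V E \<and> (ind \<longrightarrow> grid_induced_subgraph V E)"
    by (rule walk_consistent_imp_grid_subgraph[OF graph(1)])
  then show ?thesis
    by (cases ind) (simp_all add: grid_class_def)
qed

lemma is_pls_walk_verifier:
  assumes "c \<ge> 1"
  shows "is_pls c (grid_class ind) (walk_verifier ind)"
  unfolding is_pls_def
proof (intro conjI allI impI)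
  fix V E
  assume "admissible c V E \<and> grid_class ind V E"
  then show "\<exists>cert. all_accept (walk_verifier ind) V E cert"
    using walk_verifier_complete[OF assms _ _ refl] by blast
next
  fix V E cert
  assume "admissible c V E \<and> \<not> grid_class ind V E"
  then show "\<not> all_accept (walk_verifier ind) V E cert"
    using walk_verifier_sound by blast
qed

lemma local_complexity_le:
  assumes "is_pls c C A"
    and "\<forall>V E. admissible c V E \<and> C V E \<and> card V = n \<longrightarrow>
      (\<exists>cert. all_accept A V E cert \<and> (\<forall>v\<in>V. length (cert v) \<le> k))"
  shows "local_complexity c C n \<le> k"
  unfolding local_complexity_def by (rule Least_le) (use assms in blast)

lemma local_complexity_attained:
  assumes "is_pls c C A"
    and "\<forall>V E. admissible c V E \<and> C V E \<and> card V = n \<longrightarrow>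
      (\<exists>cert. all_accept A V E cert \<and> (\<forall>v\<in>V. length (cert v) \<le> k))"
  shows "\<exists>A. is_pls c C A \<and> (\<forall>V E. admissible c V E \<and> C V E \<and> card V = n \<longrightarrow>
      (\<exists>cert. all_accept A V E cert \<and> (\<forall>v\<in>V. length (cert v) \<le> local_complexity c C n)))"
  unfolding local_complexity_def by (rule LeastI_ex) (use assms in blast)

lemma walk_verifier_bounded:
  assumes "c \<ge> 1"
  shows "\<forall>V E. admissible c V E \<and> grid_class ind V E \<and> card V = n \<longrightarrow>
    (\<exists>cert. all_accept (walk_verifier ind) V E cert \<and> (\<forall>v\<in>V. length (cert v) \<le> (12 + 2 * c) * n))"
  using walk_verifier_complete[OF assms] by blast

lemma local_complexity_grid_class_le:
  assumes "c \<ge> 1"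
  shows "local_complexity c (grid_class ind) n \<le> (12 + 2 * c) * n"
  by (rule local_complexity_le[OF is_pls_walk_verifier[OF assms] walk_verifier_bounded[OF assms]])

section \<open>The gadget\<close>

datatype part = Shared | Lower | Upper

datatype node = Col int int | Lo int int | Hi int int | LoBit nat bool bool | HiBit nat bool bool

fun part_of :: "node \<Rightarrow> part" where
  "part_of (Col a b) = Shared"
| "part_of (Lo a b) = Lower"
| "part_of (LoBit i dx dy) = Lower"
| "part_of (Hi a b) = Upper"
| "part_of (HiBit i dx dy) = Upper"

text \<open>The column \<open>Col\<close> is a \<open>2 \<times> 7\<close> block, the rails \<open>Lo\<close> and \<open>Hi\<close> are ladders in rows 0, 1 and
  5, 6, and bit \<open>i\<close> owns the columns \<open>4 i + 4\<close> and \<open>4 i + 5\<close>: its lower block lies in rows 2, 3 if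
  \<open>x i\<close> and in rows -1, -2 otherwise, its upper block in rows 3, 4 if \<open>y i\<close> and in rows 7, 8
  otherwise. So the two blocks of bit \<open>i\<close> collide exactly when \<open>x i \<and> y i\<close>.\<close>

fun place :: "(nat \<Rightarrow> bool) \<Rightarrow> (nat \<Rightarrow> bool) \<Rightarrow> node \<Rightarrow> int \<times> int" where
  "place x y (Col a b) = (a, b)"
| "place x y (Lo a b) = (a, b)"
| "place x y (Hi a b) = (a, b)"
| "place x y (LoBit i dx dy) = (4 * int i + 4 + of_bool dx, if x i then 2 + of_bool dy else -1 - of_bool dy)"
| "place x y (HiBit i dx dy) = (4 * int i + 4 + of_bool dx, if y i then 3 + of_bool dy else 8 - of_bool dy)"

definition parts_compatible :: "part \<Rightarrow> part \<Rightarrow> bool" where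
  "parts_compatible p q \<longleftrightarrow> p = Shared \<or> q = Shared \<or> p = q"

text \<open>Lower and upper nodes are never joined, even where they touch: this is what lets the two
  halves be exchanged independently.\<close>

definition node_adj :: "(nat \<Rightarrow> bool) \<Rightarrow> (nat \<Rightarrow> bool) \<Rightarrow> node \<Rightarrow> node \<Rightarrow> bool" where
  "node_adj x y s t \<longleftrightarrow> grid_adj (place x y s) (place x y t) \<and> parts_compatible (part_of s) (part_of t)"

definition rail_end :: "nat \<Rightarrow> int" where
  "rail_end m = 4 * int m + 1"

text \<open>The \<open>k\<close> extra nodes on row 0 of the lower rail only pad the number of vertices.\<close>

fun in_gadget :: "nat \<Rightarrow> nat \<Rightarrow> node \<Rightarrow> bool" where
  "in_gadget m k (Col a b) \<longleftrightarrow> 0 \<le> a \<and> a \<le> 1 \<and> 0 \<le> b \<and> b \<le> 6"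
| "in_gadget m k (Lo a b) \<longleftrightarrow>
     2 \<le> a \<and> (a \<le> rail_end m \<and> (b = 0 \<or> b = 1) \<or> a \<le> rail_end m + int k \<and> b = 0)"
| "in_gadget m k (Hi a b) \<longleftrightarrow> 2 \<le> a \<and> a \<le> rail_end m \<and> (b = 5 \<or> b = 6)"
| "in_gadget m k (LoBit i dx dy) \<longleftrightarrow> i < m"
| "in_gadget m k (HiBit i dx dy) \<longleftrightarrow> i < m"

definition gadget_nodes :: "nat \<Rightarrow> nat \<Rightarrow> node set" where
  "gadget_nodes m k = {s. in_gadget m k s}"

lemma node_adj_sym: "node_adj x y s t \<Longrightarrow> node_adj x y t s"
  by (auto simp: node_adj_def parts_compatible_def intro: grid_adj_sym)

lemma node_adj_irrefl: "\<not> node_adj x y s s"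
  by (simp add: node_adj_def grid_adj_irrefl)

lemma place_inj:
  assumes "\<forall>i<m. \<not> (x i \<and> y i)" "in_gadget m k s" "in_gadget m k t" "place x y s = place x y t"
  shows "s = t"
  using assms
  apply (cases s; cases t)
  apply (auto simp: rail_end_def of_bool_def split: if_splits)
  apply presburger+
  done

lemma lower_upper_apart:
  assumes "\<forall>i<m. \<not> (x i \<and> y i)" "in_gadget m k s" "in_gadget m k t"
    and "part_of s = Lower" "part_of t = Upper"
  shows "\<not> grid_adj (place x y s) (place x y t)"
  using assms
  apply (cases s; cases t)
  apply (auto simp: grid_adj_def rail_end_def abs_if of_bool_def split: if_splits)
  apply presburger+
  done

lemma node_adj_iff_grid_adj:
  assumes "\<forall>i<m. \<not> (x i \<and> y i)" "in_gadget m k s" "in_gadget m k t"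
  shows "node_adj x y s t \<longleftrightarrow> grid_adj (place x y s) (place x y t)"
proof -
  have "grid_adj (place x y s) (place x y t) \<Longrightarrow> parts_compatible (part_of s) (part_of t)"
    using lower_upper_apart[OF assms] lower_upper_apart[OF assms(1,3,2)] grid_adj_sym
    by (cases "part_of s"; cases "part_of t") (auto simp: parts_compatible_def)
  then show ?thesis
    by (auto simp: node_adj_def)
qed

lemma node_adj_lower:
  "part_of s = Lower \<Longrightarrow> node_adj x y s t \<longleftrightarrow> node_adj x y' s t"
  by (cases s; cases t) (simp_all add: node_adj_def parts_compatible_def)

lemma node_adj_upper:
  "part_of s = Upper \<Longrightarrow> node_adj x y s t \<longleftrightarrow> node_adj x' y s t"
  by (cases s; cases t) (simp_all add: node_adj_def parts_compatible_def)

lemma node_adj_shared: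
  assumes "in_gadget m k s" "part_of s = Shared"
  shows "node_adj x y s t \<longleftrightarrow> node_adj x' y' s t"
  using assms
  by (cases s; cases t) (auto simp: node_adj_def parts_compatible_def grid_adj_def of_bool_def)

lemma node_adj_shared_upper:
  assumes "in_gadget m k s" "in_gadget m k t" "part_of s = Shared" "part_of t = Upper"
    and "node_adj x y s t"
  shows "t = Hi 2 5 \<or> t = Hi 2 6"
  using assms
  by (cases s; cases t) (auto simp: node_adj_def grid_adj_def abs_if of_bool_def split: if_splits)

lemma gadget_nodes_subset:
  "gadget_nodes m k \<subseteq> (\<lambda>(a, b). Col a b) ` ({0..1} \<times> {0..6}) \<union> (\<lambda>(a, b). Lo a b) ` ({2..rail_end m + int k} \<times> {0..1})
     \<union> (\<lambda>(a, b). Hi a b) ` ({2..rail_end m} \<times> {5..6})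
     \<union> (\<lambda>(i, dx, dy). LoBit i dx dy) ` ({..<m} \<times> UNIV) \<union> (\<lambda>(i, dx, dy). HiBit i dx dy) ` ({..<m} \<times> UNIV)"
  (is "_ \<subseteq> ?B")
proof
  fix s assume "s \<in> gadget_nodes m k"
  then show "s \<in> ?B"
    by (cases s) (auto simp: gadget_nodes_def image_iff rail_end_def)
qed

lemma finite_gadget_nodes: "finite (gadget_nodes m k)"
  by (rule finite_subset[OF gadget_nodes_subset]) auto

lemma card_gadget_nodes_0: "card (gadget_nodes m 0) \<le> 24 * m + 14"
proof -
  let ?C = "(\<lambda>(a, b). Col a b) ` ({0..1} \<times> {0..6})"
  let ?L = "(\<lambda>(a, b). Lo a b) ` ({2..rail_end m + int 0} \<times> {0..1})"
  let ?H = "(\<lambda>(a, b). Hi a b) ` ({2..rail_end m} \<times> {5..6})"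
  let ?LB = "(\<lambda>(i, dx, dy). LoBit i dx dy) ` ({..<m} \<times> UNIV)"
  let ?HB = "(\<lambda>(i, dx, dy). HiBit i dx dy) ` ({..<m} \<times> UNIV)"
  have bits: "card (UNIV :: (bool \<times> bool) set) = 4"
    by (simp add: UNIV_Times_UNIV[symmetric] card_cartesian_product del: UNIV_Times_UNIV)
  have "card ?C \<le> 14" "card ?L \<le> 8 * m" "card ?H \<le> 8 * m" "card ?LB \<le> 4 * m" "card ?HB \<le> 4 * m"
    by (auto intro!: card_image_le[THEN order.trans] simp: card_cartesian_product rail_end_def bits)
  moreover have "card (gadget_nodes m 0) \<le> card (?C \<union> ?L \<union> ?H \<union> ?LB \<union> ?HB)"
    by (rule card_mono[OF _ gadget_nodes_subset]) auto
  moreover have "card (?C \<union> ?L \<union> ?H \<union> ?LB \<union> ?HB) \<le> card ?C + card ?L + card ?H + card ?LB + card ?HB"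
    using card_Un_le[of "?C \<union> ?L \<union> ?H \<union> ?LB" ?HB] card_Un_le[of "?C \<union> ?L \<union> ?H" ?LB]
      card_Un_le[of "?C \<union> ?L" ?H] card_Un_le[of ?C ?L]
    by linarith
  ultimately show ?thesis
    by linarith
qed

lemma card_gadget_nodes: "card (gadget_nodes m k) = card (gadget_nodes m 0) + k"
proof (induction k)
  case 0
  then show ?case by simp
next
  case (Suc k)
  have "in_gadget m (Suc k) s \<longleftrightarrow> s = Lo (rail_end m + int k + 1) 0 \<or> in_gadget m k s" for s
    by (cases s) (auto simp: rail_end_def)
  then have "gadget_nodes m (Suc k) = insert (Lo (rail_end m + int k + 1) 0) (gadget_nodes m k)"
    by (auto simp: gadget_nodes_def)
  moreover have "Lo (rail_end m + int k + 1) 0 \<notin> gadget_nodes m k"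
    by (simp add: gadget_nodes_def)
  ultimately show ?case
    using Suc finite_gadget_nodes by simp
qed

lemma rtrancl_relabel:
  assumes "(a, b) \<in> r\<^sup>*" and "\<And>s t. (s, t) \<in> r \<Longrightarrow> (g s, g t) \<in> q"
  shows "(g a, g b) \<in> q\<^sup>*"
  using assms(1) by induction (auto intro: rtrancl_into_rtrancl assms(2))

lemma connected_graph_relabel:
  assumes bij: "bij_betw h V S" and E: "\<And>u v. E u v \<longleftrightarrow> u \<in> V \<and> v \<in> V \<and> R (h u) (h v)"
    and sym: "\<And>s t. R s t \<Longrightarrow> R t s" and root: "s0 \<in> S"
    and reach: "\<And>s. s \<in> S \<Longrightarrow> (s, s0) \<in> {(a, b). a \<in> S \<and> b \<in> S \<and> R a b}\<^sup>*"
  shows "connected_graph V E"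
  unfolding connected_graph_def
proof (intro ballI)
  fix u v assume u: "u \<in> V" and v: "v \<in> V"
  define g where "g = inv_into V h"
  have g: "g (h w) = w" "h w \<in> S" if "w \<in> V" for w
    using bij that by (auto simp: g_def bij_betw_def)
  have gS: "g s \<in> V" "h (g s) = s" if "s \<in> S" for s
    using bij that by (auto simp: g_def bij_betw_def f_inv_into_f inv_into_into)
  have to_root: "(w, g s0) \<in> {(a, b). E a b}\<^sup>*" if "w \<in> V" for w
    using rtrancl_relabel[OF reach[OF g(2)[OF that]], of g] g[OF that] gS E by auto
  have "(g s0, v) \<in> ({(a, b). E a b}\<inverse>)\<^sup>*"
    using to_root[OF v] by (simp add: rtrancl_converseI)
  moreover have "{(a, b). E a b}\<inverse> = {(a, b). E a b}"
    using E sym by auto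
  ultimately show "(u, v) \<in> {(a, b). E a b}\<^sup>*"
    using to_root[OF u] by (metis rtrancl_trans)
qed

definition grid_embedding_on :: "'a set \<Rightarrow> ('a \<Rightarrow> 'a \<Rightarrow> bool) \<Rightarrow> ('a \<Rightarrow> int \<times> int) \<Rightarrow> bool" where
  "grid_embedding_on S R g \<longleftrightarrow> inj_on g S \<and> (\<forall>s\<in>S. \<forall>t\<in>S. R s t \<longrightarrow> grid_adj (g s) (g t))"

lemma grid_subgraph_relabel:
  assumes bij: "bij_betw h V S" and E: "\<And>u v. E u v \<longleftrightarrow> u \<in> V \<and> v \<in> V \<and> R (h u) (h v)"
  shows "grid_subgraph V E \<longleftrightarrow> (\<exists>g. grid_embedding_on S R g)"
    and "(\<exists>g. inj_on g S \<and> (\<forall>s\<in>S. \<forall>t\<in>S. R s t \<longleftrightarrow> grid_adj (g s) (g t))) \<Longrightarrow> grid_induced_subgraph V E"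
proof -
  have inv: "bij_betw (inv_into V h) S V"
    using bij by (rule bij_betw_inv_into)
  have hinv: "h (inv_into V h s) = s" if "s \<in> S" for s
    using bij that by (simp add: bij_betw_def f_inv_into_f)
  show "grid_subgraph V E \<longleftrightarrow> (\<exists>g. grid_embedding_on S R g)"
  proof
    assume "grid_subgraph V E"
    then obtain f where "inj_on f V" "\<forall>u\<in>V. \<forall>v\<in>V. E u v \<longrightarrow> grid_adj (f u) (f v)"
      by (auto simp: grid_subgraph_def)
    then show "\<exists>g. grid_embedding_on S R g"
      using inv hinv E unfolding grid_embedding_on_def
      by (intro exI[of _ "f \<circ> inv_into V h"])
        (auto simp: bij_betw_def intro: comp_inj_on inj_on_subset, metis imageI)
  next
    assume "\<exists>g. grid_embedding_on S R g"
    then obtain g where "inj_on g S" "\<forall>s\<in>S. \<forall>t\<in>S. R s t \<longrightarrow> grid_adj (g s) (g t)"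
      by (auto simp: grid_embedding_on_def)
    then show "grid_subgraph V E"
      using bij E unfolding grid_subgraph_def
      by (intro exI[of _ "g \<circ> h"]) (auto simp: bij_betw_def intro: comp_inj_on)
  qed
  assume "\<exists>g. inj_on g S \<and> (\<forall>s\<in>S. \<forall>t\<in>S. R s t \<longleftrightarrow> grid_adj (g s) (g t))"
  then obtain g where "inj_on g S" "\<forall>s\<in>S. \<forall>t\<in>S. R s t \<longleftrightarrow> grid_adj (g s) (g t)"
    by blast
  then show "grid_induced_subgraph V E"
    using bij E unfolding grid_induced_subgraph_def
    by (intro exI[of _ "g \<circ> h"]) (auto simp: bij_betw_def intro: comp_inj_on)
qed

definition gadget_size :: "nat \<Rightarrow> nat \<Rightarrow> nat" where
  "gadget_size m k = card (gadget_nodes m k)"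

definition gadget_label :: "nat \<Rightarrow> nat \<Rightarrow> nat \<Rightarrow> node" where
  "gadget_label m k = (SOME h. bij_betw h {1..gadget_size m k} (gadget_nodes m k))"

definition gadget_edge :: "nat \<Rightarrow> nat \<Rightarrow> (nat \<Rightarrow> bool) \<Rightarrow> (nat \<Rightarrow> bool) \<Rightarrow> nat \<Rightarrow> nat \<Rightarrow> bool" where
  "gadget_edge m k x y u v \<longleftrightarrow> u \<in> {1..gadget_size m k} \<and> v \<in> {1..gadget_size m k} \<and>
     node_adj x y (gadget_label m k u) (gadget_label m k v)"

lemma bij_gadget_label: "bij_betw (gadget_label m k) {1..gadget_size m k} (gadget_nodes m k)"
proof -
  have "\<exists>h. bij_betw h {1..gadget_size m k} (gadget_nodes m k)"
    unfolding gadget_size_def by (rule ex_bij_betw_nat_finite_1[OF finite_gadget_nodes])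
  then show ?thesis
    unfolding gadget_label_def by (rule someI_ex)
qed

lemma gadget_label_in: "u \<in> {1..gadget_size m k} \<Longrightarrow> in_gadget m k (gadget_label m k u)"
  using bij_gadget_label[of m k] by (auto simp: bij_betw_def gadget_nodes_def)

definition lower_rail :: "int \<Rightarrow> int \<Rightarrow> node" where
  "lower_rail a b = (if a \<le> 1 then Col a b else Lo a b)"

definition upper_rail :: "int \<Rightarrow> int \<Rightarrow> node" where
  "upper_rail a b = (if a \<le> 1 then Col a b else Hi a b)"

lemma place_rail [simp]: "place x y (lower_rail a b) = (a, b)" "place x y (upper_rail a b) = (a, b)"
  by (simp_all add: lower_rail_def upper_rail_def)

lemma chain_rtrancl:
  assumes "\<And>t. t < L \<Longrightarrow> (f (Suc t), f t) \<in> r" and "t \<le> L"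
  shows "(f t, f 0) \<in> r\<^sup>*"
  using assms(2)
proof (induction t)
  case (Suc t)
  then have "(f (Suc t), f t) \<in> r" "(f t, f 0) \<in> r\<^sup>*"
    using assms(1) by simp_all
  then show ?case
    by (rule converse_rtrancl_into_rtrancl)
qed simp

definition gadget_rel :: "nat \<Rightarrow> nat \<Rightarrow> (nat \<Rightarrow> bool) \<Rightarrow> (nat \<Rightarrow> bool) \<Rightarrow> node rel" where
  "gadget_rel m k x y = {(s, t). in_gadget m k s \<and> in_gadget m k t \<and> node_adj x y s t}"

lemma gadget_rel_step:
  "in_gadget m k s \<Longrightarrow> in_gadget m k t \<Longrightarrow> node_adj x y s t \<Longrightarrow> (t, r) \<in> (gadget_rel m k x y)\<^sup>* \<Longrightarrow>
    (s, r) \<in> (gadget_rel m k x y)\<^sup>*"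
  by (rule converse_rtrancl_into_rtrancl) (auto simp: gadget_rel_def)

lemma lower_rail_step:
  "t < nat (rail_end m + int k) \<Longrightarrow> (lower_rail (int (Suc t)) 0, lower_rail (int t) 0) \<in> gadget_rel m k x y"
  by (auto simp: gadget_rel_def node_adj_def lower_rail_def grid_adj_def parts_compatible_def)

lemma column_step:
  "0 \<le> a \<Longrightarrow> a \<le> 1 \<Longrightarrow> t < 6 \<Longrightarrow> (Col a (int (Suc t)), Col a (int t)) \<in> gadget_rel m k x y"
  by (auto simp: gadget_rel_def node_adj_def grid_adj_def parts_compatible_def)

lemma upper_rail_step:
  "t < nat (rail_end m) \<Longrightarrow> (upper_rail (int (Suc t)) 5, upper_rail (int t) 5) \<in> gadget_rel m k x y"
  by (auto simp: gadget_rel_def node_adj_def upper_rail_def grid_adj_def parts_compatible_def)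

lemma lower_rail_reaches_corner:
  assumes "0 \<le> a" "a \<le> rail_end m + int k"
  shows "(lower_rail a 0, Col 0 0) \<in> (gadget_rel m k x y)\<^sup>*"
proof -
  have "(lower_rail (int (nat a)) 0, lower_rail (int 0) 0) \<in> (gadget_rel m k x y)\<^sup>*"
    by (rule chain_rtrancl[where L = "nat (rail_end m + int k)"]) (use assms lower_rail_step in auto)
  then show ?thesis
    using assms by (simp add: lower_rail_def)
qed

lemma column_reaches_corner:
  assumes "0 \<le> a" "a \<le> 1" "0 \<le> b" "b \<le> 6"
  shows "(Col a b, Col 0 0) \<in> (gadget_rel m k x y)\<^sup>*"
proof -
  have "(Col a (int (nat b)), Col a (int 0)) \<in> (gadget_rel m k x y)\<^sup>*"
    by (rule chain_rtrancl[where L = 6]) (use assms column_step in auto)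
  moreover have "(lower_rail a 0, Col 0 0) \<in> (gadget_rel m k x y)\<^sup>*"
    using assms by (intro lower_rail_reaches_corner) (auto simp: rail_end_def)
  ultimately show ?thesis
    using assms by (simp add: lower_rail_def)
qed

lemma upper_rail_reaches_corner:
  assumes "0 \<le> a" "a \<le> rail_end m"
  shows "(upper_rail a 5, Col 0 0) \<in> (gadget_rel m k x y)\<^sup>*"
proof -
  have "(upper_rail (int (nat a)) 5, upper_rail (int 0) 5) \<in> (gadget_rel m k x y)\<^sup>*"
    by (rule chain_rtrancl[where L = "nat (rail_end m)"]) (use assms upper_rail_step in auto)
  moreover have "(Col 0 5, Col 0 0) \<in> (gadget_rel m k x y)\<^sup>*"
    by (rule column_reaches_corner) auto
  ultimately show ?thesis
    using assms by (simp add: upper_rail_def)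
qed

lemma lower_node_reaches_corner:
  assumes "in_gadget m k (Lo a b)"
  shows "(Lo a b, Col 0 0) \<in> (gadget_rel m k x y)\<^sup>*"
proof -
  have rail: "(Lo a 0, Col 0 0) \<in> (gadget_rel m k x y)\<^sup>*"
    using lower_rail_reaches_corner[of a m k] assms by (auto simp: lower_rail_def)
  then show ?thesis
    using assms
    by (cases "b = 0") (auto intro!: gadget_rel_step[OF _ _ _ rail] simp: node_adj_def grid_adj_def parts_compatible_def)
qed

lemma upper_node_reaches_corner:
  assumes "in_gadget m k (Hi a b)"
  shows "(Hi a b, Col 0 0) \<in> (gadget_rel m k x y)\<^sup>*"
proof -
  have rail: "(Hi a 5, Col 0 0) \<in> (gadget_rel m k x y)\<^sup>*"
    using upper_rail_reaches_corner[of a m k] assms by (auto simp: upper_rail_def)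
  then show ?thesis
    using assms
    by (cases "b = 5") (auto intro!: gadget_rel_step[OF _ _ _ rail] simp: node_adj_def grid_adj_def parts_compatible_def)
qed

lemma lower_bit_reaches_corner:
  assumes "i < m"
  shows "(LoBit i dx dy, Col 0 0) \<in> (gadget_rel m k x y)\<^sup>*"
proof -
  define c where "c = 4 * int i + 4 + of_bool dx"
  have rail: "(Lo c (of_bool (x i)), Col 0 0) \<in> (gadget_rel m k x y)\<^sup>*"
    using assms by (intro lower_node_reaches_corner) (simp add: c_def rail_end_def)
  have bit: "(LoBit i dx False, Col 0 0) \<in> (gadget_rel m k x y)\<^sup>*"
    using assms by (intro gadget_rel_step[OF _ _ _ rail])
      (auto simp: c_def rail_end_def node_adj_def grid_adj_def parts_compatible_def)
  then show ?thesis
    using assms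
    by (cases dy) (auto intro!: gadget_rel_step[OF _ _ _ bit] simp: node_adj_def grid_adj_def parts_compatible_def)
qed

lemma upper_bit_reaches_corner:
  assumes "i < m"
  shows "(HiBit i dx dy, Col 0 0) \<in> (gadget_rel m k x y)\<^sup>*"
proof -
  define c where "c = 4 * int i + 4 + of_bool dx"
  have rail: "(Hi c (6 - of_bool (y i)), Col 0 0) \<in> (gadget_rel m k x y)\<^sup>*"
    using assms by (intro upper_node_reaches_corner) (simp add: c_def rail_end_def)
  have bit: "(HiBit i dx True, Col 0 0) \<in> (gadget_rel m k x y)\<^sup>*"
    using assms by (intro gadget_rel_step[OF _ _ _ rail])
      (auto simp: c_def rail_end_def node_adj_def grid_adj_def parts_compatible_def)
  then show ?thesis
    using assms
    by (cases dy) (auto intro!: gadget_rel_step[OF _ _ _ bit] simp: node_adj_def grid_adj_def parts_compatible_def)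
qed

lemma gadget_reaches_corner:
  assumes "in_gadget m k s"
  shows "(s, Col 0 0) \<in> (gadget_rel m k x y)\<^sup>*"
proof (cases s)
  case (Col a b)
  then show ?thesis using assms column_reaches_corner by simp
next
  case (Lo a b)
  then show ?thesis using assms lower_node_reaches_corner by simp
next
  case (Hi a b)
  then show ?thesis using assms upper_node_reaches_corner by simp
next
  case (LoBit i dx dy)
  then show ?thesis using assms lower_bit_reaches_corner by simp
next
  case (HiBit i dx dy)
  then show ?thesis using assms upper_bit_reaches_corner by simp
qed

lemma admissible_gadget:
  assumes "c \<ge> 1"
  shows "admissible c {1..gadget_size m k} (gadget_edge m k x y)"
proof -
  have corner: "Col 0 0 \<in> gadget_nodes m k"
    by (simp add: gadget_nodes_def)
  then have size: "gadget_size m k \<ge> 1"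
    using finite_gadget_nodes[of m k] by (auto simp: gadget_size_def Suc_le_eq card_gt_0_iff)
  have "simple_graph {1..gadget_size m k} (gadget_edge m k x y)"
    using size node_adj_irrefl node_adj_sym unfolding simple_graph_def gadget_edge_def by auto
  moreover have "connected_graph {1..gadget_size m k} (gadget_edge m k x y)"
  proof (rule connected_graph_relabel[OF bij_gadget_label _ node_adj_sym corner])
    show "(s, Col 0 0) \<in> {(a, b). a \<in> gadget_nodes m k \<and> b \<in> gadget_nodes m k \<and> node_adj x y a b}\<^sup>*"
      if "s \<in> gadget_nodes m k" for s
      using gadget_reaches_corner[of m k s x y] that by (simp add: gadget_rel_def gadget_nodes_def)
  qed (simp add: gadget_edge_def)
  moreover have "gadget_size m k \<le> gadget_size m k ^ c"
    using size assms by (metis One_nat_def le_eq_less_or_eq power_increasing power_one_right)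
  ultimately show ?thesis
    by (auto simp: admissible_def)
qed

lemma gadget_grid_induced_subgraph:
  assumes "\<forall>i<m. \<not> (x i \<and> y i)"
  shows "grid_induced_subgraph {1..gadget_size m k} (gadget_edge m k x y)"
proof (rule grid_subgraph_relabel(2)[OF bij_gadget_label])
  show "\<exists>g. inj_on g (gadget_nodes m k) \<and>
      (\<forall>s\<in>gadget_nodes m k. \<forall>t\<in>gadget_nodes m k. node_adj x y s t \<longleftrightarrow> grid_adj (g s) (g t))"
    using place_inj[OF assms] node_adj_iff_grid_adj[OF assms]
    by (intro exI[of _ "place x y"]) (auto simp: gadget_nodes_def inj_on_def)
qed (simp add: gadget_edge_def)

section \<open>Rigidity\<close>

lemma grid_adj_cases:
  "grid_adj p q \<Longrightarrow> q = p + (1, 0) \<or> q = p + (-1, 0) \<or> q = p + (0, 1) \<or> q = p + (0, -1)"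
  unfolding grid_adj_iff_unit by (drule grid_unit_cases) (auto simp: algebra_simps)

lemma grid_square_fourth_vertex:
  assumes "grid_adj P Q" "grid_adj Q R" "grid_adj R T" "grid_adj T P" "P \<noteq> R" "Q \<noteq> T"
  shows "R = Q + T - P"
proof -
  obtain p1 p2 where P: "P = (p1, p2)"
    by (cases P)
  from grid_adj_cases[OF assms(1)] grid_adj_cases[OF assms(2)] grid_adj_cases[OF grid_adj_sym[OF assms(4)]]
    assms(3,5,6)
  show ?thesis
    unfolding P by (auto simp: grid_adj_def)
qed

definition perp :: "int \<times> int \<Rightarrow> int \<times> int \<Rightarrow> bool" where
  "perp u v \<longleftrightarrow> fst u * fst v + snd u * snd v = 0"

lemma grid_unit_perp_cases:
  assumes "grid_unit a" "grid_unit b" "perp a b" "grid_unit u"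
  shows "u = a \<or> u = - a \<or> u = b \<or> u = - b"
  using grid_unit_cases[OF assms(1)] grid_unit_cases[OF assms(2)] grid_unit_cases[OF assms(4)] assms(3)
  by (auto simp: perp_def)

definition frame_map :: "int \<times> int \<Rightarrow> int \<times> int \<Rightarrow> int \<times> int \<Rightarrow> int \<times> int" where
  "frame_map U W p = (fst p * fst U + snd p * fst W, fst p * snd U + snd p * snd W)"

lemma frame_map_add: "frame_map U W (p + q) = frame_map U W p + frame_map U W q"
  by (simp add: frame_map_def algebra_simps)

lemma frame_map_unit_perp:
  assumes "grid_unit U" "grid_unit W" "perp U W" "grid_unit d" "grid_unit e" "perp d e"
  shows "grid_unit (frame_map U W d) \<and> grid_unit (frame_map U W e) \<and> perp (frame_map U W d) (frame_map U W e)"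
  using grid_unit_cases[OF assms(1)] grid_unit_cases[OF assms(2)] grid_unit_cases[OF assms(4)]
    grid_unit_cases[OF assms(5)] assms(3,6)
  by (auto simp: perp_def frame_map_def grid_unit_def)

lemma square_completion:
  fixes g ps :: "'a \<Rightarrow> int \<times> int"
  assumes emb: "grid_embedding_on S R g"
    and frame: "grid_unit U" "grid_unit W" "perp U W"
    and dirs: "grid_unit d" "grid_unit e" "perp d e"
    and nodes: "p \<in> S" "q \<in> S" "q' \<in> S" "r \<in> S" "r' \<in> S"
    and known: "g p = z + frame_map U W (ps p)" "g q = z + frame_map U W (ps q)"
      "g q' = z + frame_map U W (ps q')"
    and shape: "ps q = ps p + d" "ps q' = ps q + e" "ps r = ps q + d" "ps r' = ps q' + d"
    and edges: "R q r" "R r r'" "R q' r'"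
  shows "g r = z + frame_map U W (ps r) \<and> g r' = z + frame_map U W (ps r')"
proof -
  have inj: "inj_on g S" and adj: "\<And>s t. s \<in> S \<Longrightarrow> t \<in> S \<Longrightarrow> R s t \<Longrightarrow> grid_adj (g s) (g t)"
    using emb by (auto simp: grid_embedding_on_def)
  define D where "D = frame_map U W d"
  define F where "F = frame_map U W e"
  have DF: "grid_unit D" "grid_unit F" "perp D F"
    using frame_map_unit_perp[OF frame dirs] by (simp_all add: D_def F_def)
  have gq: "g q = g p + D" and gq': "g q' = g q + F"
    using known shape by (simp_all add: D_def F_def frame_map_add algebra_simps)
  have g_ne: "g s \<noteq> g t" if "s \<in> S" "t \<in> S" "ps s \<noteq> ps t" for s t
    using inj that by (metis inj_onD)
  have "ps r \<noteq> ps p" "ps r \<noteq> ps q'" "ps r' \<noteq> ps q"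
    using shape grid_unit_cases[OF dirs(1)] grid_unit_cases[OF dirs(2)] dirs(3)
    by (auto simp: perp_def prod_eq_iff)
  then have rp: "g r \<noteq> g p" and rq': "g r \<noteq> g q'" and r'q: "g r' \<noteq> g q"
    using g_ne nodes by blast+
  have "grid_adj (g q) (g q')"
    using DF(2) gq' by (simp add: grid_adj_iff_unit)
  then have sides: "grid_adj (g q) (g r)" "grid_adj (g r) (g r')" "grid_adj (g r') (g q')" "grid_adj (g q') (g q)"
    using adj nodes edges grid_adj_sym by blast+
  have r': "g r' = g r + F"
    using grid_square_fourth_vertex[OF sides r'q[symmetric] rq'] gq' by simp
  have "grid_unit (g r - g q)"
    using sides(1) by (simp add: grid_adj_iff_unit)
  \<comment> \<open>any other unit step would put \<open>r\<close> onto \<open>p\<close> or \<open>q'\<close>, or \<open>r'\<close> onto \<open>q\<close>\<close>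
  moreover have "g r - g q \<noteq> - D" "g r - g q \<noteq> F" "g r - g q \<noteq> - F"
    using rp rq' r'q unfolding gq' gq r' by (auto simp: diff_eq_eq algebra_simps)
  ultimately have "g r - g q = D"
    using grid_unit_perp_cases[OF DF] by blast
  then show ?thesis
    using known shape r' by (simp add: D_def F_def frame_map_add algebra_simps)
qed

lemma ladder_completion:
  fixes g ps :: "'a \<Rightarrow> int \<times> int" and rung :: "nat \<Rightarrow> bool \<Rightarrow> 'a"
  assumes emb: "grid_embedding_on S R g"
    and frame: "grid_unit U" "grid_unit W" "perp U W"
    and dirs: "grid_unit d" "grid_unit e" "perp d e"
    and rungs_in: "\<And>t b. t \<le> L \<Longrightarrow> rung t b \<in> S"
    and along: "\<And>t b. ps (rung (Suc t) b) = ps (rung t b) + d"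
    and across: "\<And>t. ps (rung t True) = ps (rung t False) + e"
    and rail_edges: "\<And>t b. t < L \<Longrightarrow> R (rung t b) (rung (Suc t) b)"
    and rung_edges: "\<And>t. t \<le> L \<Longrightarrow> R (rung t False) (rung t True)"
    and start: "\<And>t b. t \<le> 1 \<Longrightarrow> g (rung t b) = z + frame_map U W (ps (rung t b))"
    and "t \<le> L"
  shows "g (rung t b) = z + frame_map U W (ps (rung t b))"
proof -
  let ?good = "\<lambda>s. g s = z + frame_map U W (ps s)"
  have "\<forall>b. ?good (rung t b) \<and> ?good (rung (Suc t) b)" if "Suc t \<le> L" for t
    using that
  proof (induction t)
    case 0
    then show ?case using start by simp
  next
    case (Suc t)
    have "?good (rung (Suc (Suc t)) False) \<and> ?good (rung (Suc (Suc t)) True)"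
    proof (rule square_completion[OF emb frame dirs])
      show "rung t False \<in> S" "rung (Suc t) False \<in> S" "rung (Suc t) True \<in> S"
        "rung (Suc (Suc t)) False \<in> S" "rung (Suc (Suc t)) True \<in> S"
        using Suc.prems by (auto intro: rungs_in)
      show "R (rung (Suc t) False) (rung (Suc (Suc t)) False)" "R (rung (Suc t) True) (rung (Suc (Suc t)) True)"
        "R (rung (Suc (Suc t)) False) (rung (Suc (Suc t)) True)"
        using Suc.prems by (auto intro: rail_edges rung_edges)
    qed (use Suc along across in \<open>auto simp: algebra_simps\<close>)
    then show ?case
      using Suc by (metis (full_types) Suc_leD)
  qed
  then show ?thesis
    using start \<open>t \<le> L\<close> by (cases t) auto
qed

lemma frame_map_corners [simp]:
  "frame_map U W (0, 0) = 0" "frame_map U W (1, 0) = U" "frame_map U W (0, 1) = W"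
  "frame_map U W (1, 1) = U + W"
  by (simp_all add: frame_map_def zero_prod_def prod_eq_iff)

lemma grid_unit_perp:
  "grid_unit U \<Longrightarrow> grid_unit W \<Longrightarrow> U \<noteq> W \<Longrightarrow> U \<noteq> - W \<Longrightarrow> perp U W"
  using grid_unit_cases[of U] grid_unit_cases[of W] by (auto simp: perp_def)

lemma gadget_corner_frame:
  assumes emb: "grid_embedding_on (gadget_nodes m k) (node_adj x y) g"
  obtains U W z where "grid_unit U" "grid_unit W" "perp U W"
    and "\<And>a b. a \<in> {0, 1} \<Longrightarrow> b \<in> {0, 1} \<Longrightarrow> g (Col a b) = z + frame_map U W (a, b)"
proof -
  have inj: "inj_on g (gadget_nodes m k)"
    and adj: "\<And>s t. s \<in> gadget_nodes m k \<Longrightarrow> t \<in> gadget_nodes m k \<Longrightarrow> node_adj x y s t \<Longrightarrow>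
      grid_adj (g s) (g t)"
    using emb by (auto simp: grid_embedding_on_def)
  define z where "z = g (Col 0 0)"
  define U where "U = g (Col 1 0) - z"
  define W where "W = g (Col 0 1) - z"
  have nodes: "Col 0 0 \<in> gadget_nodes m k" "Col 1 0 \<in> gadget_nodes m k" "Col 0 1 \<in> gadget_nodes m k"
    "Col 1 1 \<in> gadget_nodes m k"
    by (simp_all add: gadget_nodes_def)
  have "node_adj x y (Col 0 0) (Col 1 0)" "node_adj x y (Col 1 0) (Col 1 1)"
    "node_adj x y (Col 1 1) (Col 0 1)" "node_adj x y (Col 0 1) (Col 0 0)"
    by (simp_all add: node_adj_def grid_adj_def parts_compatible_def)
  then have sides: "grid_adj (g (Col 0 0)) (g (Col 1 0))" "grid_adj (g (Col 1 0)) (g (Col 1 1))"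
    "grid_adj (g (Col 1 1)) (g (Col 0 1))" "grid_adj (g (Col 0 1)) (g (Col 0 0))"
    using adj[OF nodes(1,2)] adj[OF nodes(2,4)] adj[OF nodes(4,3)] adj[OF nodes(3,1)] by simp_all
  have "g (Col 0 0) \<noteq> g (Col 1 1)" "g (Col 1 0) \<noteq> g (Col 0 1)"
    using inj_on_contraD[OF inj _ nodes(1,4)] inj_on_contraD[OF inj _ nodes(2,3)] by simp_all
  note diagonals = this
  have far: "g (Col 1 1) = z + U + W"
    using grid_square_fourth_vertex[OF sides diagonals] unfolding U_def W_def z_def by simp
  have units: "grid_unit U" "grid_unit W"
    using sides(1) sides(4)[THEN grid_adj_sym] by (simp_all add: grid_adj_iff_unit z_def U_def W_def)
  moreover have "perp U W"
  proof (rule grid_unit_perp[OF units])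
    show "U \<noteq> W"
      using diagonals(2) by (auto simp: U_def W_def)
    show "U \<noteq> - W"
      using diagonals(1) far by (auto simp: z_def)
  qed
  moreover have "g (Col a b) = z + frame_map U W (a, b)" if "a \<in> {0, 1}" "b \<in> {0, 1}" for a b
    using that far by (auto simp: z_def U_def W_def)
  ultimately show ?thesis
    using that by blast
qed

lemma gadget_rails_rigid:
  assumes emb: "grid_embedding_on (gadget_nodes m k) (node_adj x y) g"
    and frame: "grid_unit U" "grid_unit W" "perp U W"
    and corners: "\<And>a b. a \<in> {0, 1} \<Longrightarrow> b \<in> {0, 1} \<Longrightarrow> g (Col a b) = z + frame_map U W (a, b)"
  shows "\<And>a b. 0 \<le> a \<Longrightarrow> a \<le> rail_end m \<Longrightarrow> b \<in> {0, 1} \<Longrightarrow>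
      g (lower_rail a b) = z + frame_map U W (a, b)"
    and "\<And>a b. 0 \<le> a \<Longrightarrow> a \<le> rail_end m \<Longrightarrow> b \<in> {5, 6} \<Longrightarrow>
      g (upper_rail a b) = z + frame_map U W (a, b)"
proof -
  have units: "grid_unit (0, 1)" "grid_unit (1, 0)" "perp (0, 1) (1, 0)" "perp (1, 0) (0, 1)"
    by (simp_all add: grid_unit_def perp_def)
  have column: "g (Col (of_bool c) (int t)) = z + frame_map U W (place x y (Col (of_bool c) (int t)))"
    if "t \<le> 6" for c t
  proof (rule ladder_completion[where rung = "\<lambda>t c. Col (of_bool c) (int t)" and L = 6,
        OF emb frame units(1,2,3) _ _ _ _ _ _ that])
    show "g (Col (of_bool b) (int t)) = z + frame_map U W (place x y (Col (of_bool b) (int t)))"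
      if "t \<le> 1" for t b
      using corners[of "of_bool b" "int t"] that by (auto simp: le_Suc_eq)
  qed (auto simp: gadget_nodes_def node_adj_def grid_adj_def parts_compatible_def)
  have lower: "g (lower_rail (int t) (of_bool c)) = z + frame_map U W (place x y (lower_rail (int t) (of_bool c)))"
    if "t \<le> nat (rail_end m)" for c t
  proof (rule ladder_completion[where rung = "\<lambda>t c. lower_rail (int t) (of_bool c)" and L = "nat (rail_end m)",
        OF emb frame units(2,1,4) _ _ _ _ _ _ that])
    show "g (lower_rail (int t) (of_bool b)) = z + frame_map U W (place x y (lower_rail (int t) (of_bool b)))"
      if "t \<le> 1" for t b
      using corners[of "int t" "of_bool b"] that by (auto simp: le_Suc_eq lower_rail_def)
  qed (auto simp: gadget_nodes_def node_adj_def grid_adj_def parts_compatible_def lower_rail_def rail_end_def)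
  have upper: "g (upper_rail (int t) (5 + of_bool c)) =
      z + frame_map U W (place x y (upper_rail (int t) (5 + of_bool c)))"
    if "t \<le> nat (rail_end m)" for c t
  proof (rule ladder_completion[where rung = "\<lambda>t c. upper_rail (int t) (5 + of_bool c)" and L = "nat (rail_end m)",
        OF emb frame units(2,1,4) _ _ _ _ _ _ that])
    show "g (upper_rail (int t) (5 + of_bool b)) = z + frame_map U W (place x y (upper_rail (int t) (5 + of_bool b)))"
      if "t \<le> 1" for t b
      using column[where c = False and t = 5] column[where c = False and t = 6]
        column[where c = True and t = 5] column[where c = True and t = 6] that by (cases b; auto simp: le_Suc_eq upper_rail_def)
  qed (auto simp: gadget_nodes_def node_adj_def grid_adj_def parts_compatible_def upper_rail_def rail_end_def)
  show "g (lower_rail a b) = z + frame_map U W (a, b)" if "0 \<le> a" "a \<le> rail_end m" "b \<in> {0, 1}" for a b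
    using lower[of "nat a" "b = 1"] that by auto
  show "g (upper_rail a b) = z + frame_map U W (a, b)" if "0 \<le> a" "a \<le> rail_end m" "b \<in> {5, 6}" for a b
    using upper[of "nat a" "b = 6"] that by auto
qed

lemma gadget_bit_blocks_rigid:
  assumes emb: "grid_embedding_on (gadget_nodes m k) (node_adj x y) g"
    and frame: "grid_unit U" "grid_unit W" "perp U W"
    and corners: "\<And>a b. a \<in> {0, 1} \<Longrightarrow> b \<in> {0, 1} \<Longrightarrow> g (Col a b) = z + frame_map U W (a, b)"
    and i: "i < m" and both: "x i" "y i"
  shows "g (LoBit i False True) = z + frame_map U W (4 * int i + 4, 3)"
    and "g (HiBit i False False) = z + frame_map U W (4 * int i + 4, 3)"
proof -
  let ?good = "\<lambda>s. g s = z + frame_map U W (place x y s)"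
  define a where "a = 4 * int i + 4"
  have a: "2 \<le> a" "a + 1 \<le> rail_end m"
    using i by (simp_all add: a_def rail_end_def)
  note lower = gadget_rails_rigid(1)[OF emb frame corners]
    and upper = gadget_rails_rigid(2)[OF emb frame corners]
  have rails: "?good (Lo a 0)" "?good (Lo a 1)" "?good (Lo (a + 1) 1)"
    "?good (Hi a 5)" "?good (Hi a 6)" "?good (Hi (a + 1) 5)"
    using lower[of a 0] lower[of a 1] lower[of "a + 1" 1] upper[of a 5] upper[of a 6] upper[of "a + 1" 5] a
    by (simp_all add: lower_rail_def upper_rail_def)
  have units: "grid_unit (0, 1)" "grid_unit (1, 0)" "perp (0, 1) (1, 0)" "grid_unit (0, -1)" "perp (0, -1) (1, 0)"
    by (simp_all add: grid_unit_def perp_def)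
  note square = square_completion[where ps = "place x y", OF emb frame]
  have low1: "?good (LoBit i False False) \<and> ?good (LoBit i True False)"
    by (rule square[OF units(1-3), where p = "Lo a 0" and q = "Lo a 1" and q' = "Lo (a + 1) 1"])
      (use i both rails a in \<open>auto simp: gadget_nodes_def a_def node_adj_def grid_adj_def parts_compatible_def\<close>)
  have "?good (LoBit i False True) \<and> ?good (LoBit i True True)"
    by (rule square[OF units(1-3), where p = "Lo a 1" and q = "LoBit i False False" and q' = "LoBit i True False"])
      (use i both rails low1 a in \<open>auto simp: gadget_nodes_def a_def node_adj_def grid_adj_def parts_compatible_def\<close>)
  then show "g (LoBit i False True) = z + frame_map U W (4 * int i + 4, 3)"
    using both by simp
  have up1: "?good (HiBit i False True) \<and> ?good (HiBit i True True)"
    by (rule square[OF units(4,2,5), where p = "Hi a 6" and q = "Hi a 5" and q' = "Hi (a + 1) 5"])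
      (use i both rails a in \<open>auto simp: gadget_nodes_def a_def node_adj_def grid_adj_def parts_compatible_def\<close>)
  have "?good (HiBit i False False) \<and> ?good (HiBit i True False)"
    by (rule square[OF units(4,2,5), where p = "Hi a 5" and q = "HiBit i False True" and q' = "HiBit i True True"])
      (use i both rails up1 a in \<open>auto simp: gadget_nodes_def a_def node_adj_def grid_adj_def parts_compatible_def\<close>)
  then show "g (HiBit i False False) = z + frame_map U W (4 * int i + 4, 3)"
    using both by simp
qed

lemma gadget_not_grid_subgraph:
  assumes i: "i < m" and both: "x i" "y i"
  shows "\<not> grid_subgraph {1..gadget_size m k} (gadget_edge m k x y)"
proof
  let ?S = "gadget_nodes m k"
  assume "grid_subgraph {1..gadget_size m k} (gadget_edge m k x y)"
  then obtain g where emb: "grid_embedding_on ?S (node_adj x y) g"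
    using grid_subgraph_relabel(1)[OF bij_gadget_label gadget_edge_def[of m k x y]] by blast
  obtain U W z where frame: "grid_unit U" "grid_unit W" "perp U W"
    and corners: "\<And>a b. a \<in> {0, 1} \<Longrightarrow> b \<in> {0, 1} \<Longrightarrow> g (Col a b) = z + frame_map U W (a, b)"
    using gadget_corner_frame[OF emb] by blast
  have "g (LoBit i False True) = g (HiBit i False False)"
    using gadget_bit_blocks_rigid[OF emb frame corners i both] by simp
  moreover have "LoBit i False True \<in> ?S" "HiBit i False False \<in> ?S"
    using i by (simp_all add: gadget_nodes_def)
  ultimately show False
    using emb by (auto simp: grid_embedding_on_def dest: inj_onD)
qed

section \<open>Crossing\<close>

lemma local_view_cong:
  assumes "\<And>w. E u w \<longleftrightarrow> E' u w" and "\<And>w. E u w \<Longrightarrow> c w = c' w" and "c u = c' u"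
  shows "local_view E c u = local_view E' c' u"
proof -
  have "{(w, c w) | w. E u w} = {(w, c' w) | w. E' u w}"
    using assms(1,2) by auto
  then show ?thesis
    using assms(3) by (simp add: local_view_def)
qed

lemma all_accept_glue:
  assumes acc1: "all_accept A V E1 c1" and acc2: "all_accept A V E2 c2"
    and edges: "\<And>u w. u \<in> V \<Longrightarrow> E u w \<longleftrightarrow> (if side u then E2 u w else E1 u w)"
    and agree: "\<And>u w. u \<in> V \<Longrightarrow> E u w \<Longrightarrow> side u \<noteq> side w \<Longrightarrow> c1 u = c2 u \<and> c1 w = c2 w"
  shows "all_accept A V E (\<lambda>u. if side u then c2 u else c1 u)"
  unfolding all_accept_def
proof
  fix u assume u: "u \<in> V"
  show "A (local_view E (\<lambda>u. if side u then c2 u else c1 u) u)"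
  proof (cases "side u")
    case True
    have "local_view E (\<lambda>u. if side u then c2 u else c1 u) u = local_view E2 c2 u"
      by (rule local_view_cong) (use True u edges agree in auto)
    then show ?thesis
      using acc2 u by (simp add: all_accept_def)
  next
    case False
    have "local_view E (\<lambda>u. if side u then c2 u else c1 u) u = local_view E1 c1 u"
      by (rule local_view_cong) (use False u edges agree in \<open>auto dest: sym\<close>)
    then show ?thesis
      using acc1 u by (simp add: all_accept_def)
  qed
qed

text \<open>The column and its two upper neighbours: every edge between an upper node and a node outside
  the upper part has both ends here.\<close>

definition gadget_boundary :: "nat \<Rightarrow> nat \<Rightarrow> node set" where
  "gadget_boundary m k = {s. in_gadget m k s \<and> part_of s = Shared} \<union> {Hi 2 5, Hi 2 6}"

lemma finite_gadget_boundary: "finite (gadget_boundary m k)"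
proof (rule finite_subset)
  show "gadget_boundary m k \<subseteq> gadget_nodes m k \<union> {Hi 2 5, Hi 2 6}"
    by (auto simp: gadget_boundary_def gadget_nodes_def)
qed (simp add: finite_gadget_nodes)

lemma card_gadget_boundary: "card (gadget_boundary m k) \<le> 16"
proof -
  let ?C = "(\<lambda>(a, b). Col a b) ` ({0..1::int} \<times> {0..6::int})"
  have "gadget_boundary m k \<subseteq> ?C \<union> {Hi 2 5, Hi 2 6}"
    by (auto simp: gadget_boundary_def image_iff elim!: part_of.elims)
  then have "card (gadget_boundary m k) \<le> card (?C \<union> {Hi 2 5, Hi 2 6})"
    by (rule card_mono[rotated]) auto
  also have "\<dots> \<le> card ?C + card {Hi 2 5, Hi 2 6}"
    by (rule card_Un_le)
  also have "card ?C \<le> 14"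
    using card_image_le[of "{0..1::int} \<times> {0..6::int}" "\<lambda>(a, b). Col a b"] by (simp add: card_cartesian_product)
  finally show ?thesis
    by simp
qed

lemma gadget_glue:
  assumes acc1: "all_accept A {1..gadget_size m k} (gadget_edge m k x1 y1) c1"
    and acc2: "all_accept A {1..gadget_size m k} (gadget_edge m k x2 y2) c2"
    and agree: "\<And>u. u \<in> {1..gadget_size m k} \<Longrightarrow> gadget_label m k u \<in> gadget_boundary m k \<Longrightarrow> c1 u = c2 u"
  shows "all_accept A {1..gadget_size m k} (gadget_edge m k x1 y2)
    (\<lambda>u. if part_of (gadget_label m k u) = Upper then c2 u else c1 u)"
proof (rule all_accept_glue[OF acc1 acc2])
  let ?V = "{1..gadget_size m k}" and ?l = "gadget_label m k"
  show "gadget_edge m k x1 y2 u w \<longleftrightarrow>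
      (if part_of (?l u) = Upper then gadget_edge m k x2 y2 u w else gadget_edge m k x1 y1 u w)"
    if "u \<in> ?V" for u w
    using node_adj_upper[of "?l u" x1 y2 _ x2] node_adj_lower[of "?l u" x1 y2 _ y1]
      node_adj_shared[OF gadget_label_in[OF that], of x1 y2 _ x1 y1]
    by (cases "part_of (?l u)") (simp_all add: gadget_edge_def)
  show "c1 u = c2 u \<and> c1 w = c2 w"
    if "u \<in> ?V" "gadget_edge m k x1 y2 u w" "(part_of (?l u) = Upper) \<noteq> (part_of (?l w) = Upper)" for u w
  proof -
    have w: "w \<in> ?V" and adj: "node_adj x1 y2 (?l u) (?l w)"
      using that(2) by (simp_all add: gadget_edge_def)
    have in_g: "in_gadget m k (?l u)" "in_gadget m k (?l w)"
      using gadget_label_in that(1) w by blast+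
    have "?l u \<in> gadget_boundary m k \<and> ?l w \<in> gadget_boundary m k"
    proof (cases "part_of (?l u) = Upper")
      case True
      then have "part_of (?l w) = Shared"
        using that(3) adj by (cases "part_of (?l w)") (auto simp: node_adj_def parts_compatible_def)
      then show ?thesis
        using node_adj_shared_upper[OF in_g(2,1) _ True node_adj_sym[OF adj]] in_g
        by (auto simp: gadget_boundary_def)
    next
      case False
      then have "part_of (?l u) = Shared" "part_of (?l w) = Upper"
        using that(3) adj by (cases "part_of (?l u)"; auto simp: node_adj_def parts_compatible_def)+
      then show ?thesis
        using node_adj_shared_upper[OF in_g _ _ adj] in_g by (auto simp: gadget_boundary_def)
    qed
    then show ?thesis
      using agree that(1) w by blast
  qed
qed

lemma gadget_boundary_agreement:
  assumes c: "c \<ge> 1" and pls: "is_pls c C A" and sub: "\<And>V E. C V E \<Longrightarrow> grid_subgraph V E"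
    and acc1: "all_accept A {1..gadget_size m k} (gadget_edge m k x (\<lambda>i. \<not> x i)) c1"
    and acc2: "all_accept A {1..gadget_size m k} (gadget_edge m k x' (\<lambda>i. \<not> x' i)) c2"
    and agree: "\<And>u. u \<in> {1..gadget_size m k} \<Longrightarrow> gadget_label m k u \<in> gadget_boundary m k \<Longrightarrow> c1 u = c2 u"
    and i: "i < m" "x i"
  shows "x' i"
proof (rule ccontr)
  assume "\<not> x' i"
  then have "\<not> C {1..gadget_size m k} (gadget_edge m k x (\<lambda>i. \<not> x' i))"
    using gadget_not_grid_subgraph[of i m x "\<lambda>i. \<not> x' i" k] i sub by blast
  moreover have "all_accept A {1..gadget_size m k} (gadget_edge m k x (\<lambda>i. \<not> x' i))
      (\<lambda>u. if part_of (gadget_label m k u) = Upper then c2 u else c1 u)"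
    by (rule gadget_glue[OF acc1 acc2 agree])
  ultimately show False
    using pls admissible_gadget[OF c] unfolding is_pls_def by blast
qed

lemma card_gadget_boundary_ids:
  "card {u \<in> {1..gadget_size m k}. gadget_label m k u \<in> gadget_boundary m k} \<le> 16"
  (is "card ?B \<le> 16")
proof -
  have "inj_on (gadget_label m k) ?B"
    using bij_betw_imp_inj_on[OF bij_gadget_label] by (rule inj_on_subset) auto
  then have "card ?B = card (gadget_label m k ` ?B)"
    by (simp add: card_image)
  also have "\<dots> \<le> card (gadget_boundary m k)"
    by (intro card_mono finite_gadget_boundary) auto
  finally show ?thesis
    using card_gadget_boundary[of m k] by linarith
qed

lemma card_short_labellings_le:
  assumes "finite B" "card B \<le> b"
  shows "card (B \<rightarrow>\<^sub>E {w :: bool list. length w \<le> K}) \<le> 2 ^ (b * (K + 1))"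
proof -
  let ?L = "{w :: bool list. length w \<le> K}"
  have "(\<Sum>i\<le>K. (2::nat) ^ i) < 2 ^ Suc K"
    by (induction K) auto
  then have card_L: "card ?L < 2 ^ Suc K"
    using card_lists_length_le[of "UNIV :: bool set" K] by simp
  have "card (B \<rightarrow>\<^sub>E ?L) = card ?L ^ card B"
    by (simp add: card_PiE assms(1))
  also have "\<dots> \<le> (2 ^ Suc K) ^ card B"
    using card_L by (intro power_mono) auto
  also have "\<dots> \<le> (2 ^ Suc K) ^ b"
    using assms(2) by (intro power_increasing) auto
  also have "\<dots> = 2 ^ (b * (K + 1))"
    by (metis Suc_eq_plus1 mult.commute power_mult)
  finally show ?thesis .
qed

lemma gadget_certificates_long:
  assumes c: "c \<ge> 1" and pls: "is_pls c C A"
    and induced: "\<And>V E. grid_induced_subgraph V E \<Longrightarrow> C V E"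
    and sub: "\<And>V E. C V E \<Longrightarrow> grid_subgraph V E"
    and short: "\<And>V E. admissible c V E \<Longrightarrow> C V E \<Longrightarrow> card V = gadget_size m k \<Longrightarrow>
      \<exists>cert. all_accept A V E cert \<and> (\<forall>v\<in>V. length (cert v) \<le> K)"
  shows "m \<le> 16 * K + 16"
proof -
  let ?V = "{1..gadget_size m k}"
  define X where "X = {..<m} \<rightarrow>\<^sub>E (UNIV :: bool set)"
  define B where "B = {u \<in> ?V. gadget_label m k u \<in> gadget_boundary m k}"
  have "\<exists>cert. all_accept A ?V (gadget_edge m k x (\<lambda>i. \<not> x i)) cert \<and> (\<forall>v\<in>?V. length (cert v) \<le> K)" for x
    using short admissible_gadget[OF c] induced gadget_grid_induced_subgraph by simp
  then obtain cf where cf: "\<And>x. all_accept A ?V (gadget_edge m k x (\<lambda>i. \<not> x i)) (cf x)"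
    "\<And>x v. v \<in> ?V \<Longrightarrow> length (cf x v) \<le> K"
    by metis
  define kf where "kf x = restrict (cf x) B" for x
  have agreement: "x' i" if eq: "kf x = kf x'" and i: "i < m" "x i" for x x' i
  proof (rule gadget_boundary_agreement[OF c pls sub cf(1)[of x] cf(1)[of x'] _ i])
    show "cf x u = cf x' u" if "u \<in> ?V" "gadget_label m k u \<in> gadget_boundary m k" for u
      using fun_cong[OF eq, of u] that by (simp add: kf_def B_def)
  qed
  have inj: "inj_on kf X"
  proof (rule inj_onI)
    fix x x' assume "x \<in> X" "x' \<in> X" "kf x = kf x'"
    show "x = x'"
    proof
      fix i
      show "x i = x' i"
        using \<open>x \<in> X\<close> \<open>x' \<in> X\<close> agreement[OF \<open>kf x = kf x'\<close>] agreement[OF \<open>kf x = kf x'\<close>[symmetric]]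
        by (cases "i < m") (auto simp: X_def PiE_iff extensional_def)
    qed
  qed
  have "kf x \<in> B \<rightarrow>\<^sub>E {w. length w \<le> K}" for x
    unfolding kf_def using cf(2) by (simp add: restrict_PiE_iff B_def)
  then have into: "kf ` X \<subseteq> B \<rightarrow>\<^sub>E {w. length w \<le> K}"
    by blast
  have finite: "finite B" "finite {w :: bool list. length w \<le> K}"
    using finite_lists_length_le[of "UNIV :: bool set" K] by (simp_all add: B_def)
  have "(2::nat) ^ m = card X"
    by (simp add: X_def card_PiE)
  also have "\<dots> \<le> card (B \<rightarrow>\<^sub>E {w :: bool list. length w \<le> K})"
    using inj into finite_PiE[OF finite] by (rule card_inj_on_le)
  also have "\<dots> \<le> 2 ^ (16 * (K + 1))"
    using card_gadget_boundary_ids[of m k] by (intro card_short_labellings_le finite) (simp add: B_def)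
  finally show ?thesis
    by simp
qed

lemma local_complexity_grid_class_ge:
  assumes c: "c \<ge> 1" and n: "n \<ge> 70"
  shows "n div 30 \<le> 16 * local_complexity c (grid_class ind) n + 16"
proof -
  define m where "m = n div 30"
  define k where "k = n - card (gadget_nodes m 0)"
  have "card (gadget_nodes m 0) \<le> n"
    using card_gadget_nodes_0[of m] n by (simp add: m_def)
  moreover have "card (gadget_nodes m k) = card (gadget_nodes m 0) + k"
    by (rule card_gadget_nodes)
  ultimately have size: "gadget_size m k = n"
    by (simp add: gadget_size_def k_def)
  obtain A where pls: "is_pls c (grid_class ind) A"
    and short: "\<forall>V E. admissible c V E \<and> grid_class ind V E \<and> card V = n \<longrightarrow>
      (\<exists>cert. all_accept A V E cert \<and> (\<forall>v\<in>V. length (cert v) \<le> local_complexity c (grid_class ind) n))"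
    using local_complexity_attained[OF is_pls_walk_verifier[OF c] walk_verifier_bounded[OF c]] by blast
  show ?thesis
    unfolding m_def[symmetric]
  proof (rule gadget_certificates_long[where k = k, OF c pls])
    show "grid_class ind V E" if "grid_induced_subgraph V E" for V E
      using that grid_induced_subgraph_imp_grid_subgraph by (simp add: grid_class_def)
    show "grid_subgraph V E" if "grid_class ind V E" for V E
      using that grid_induced_subgraph_imp_grid_subgraph by (cases ind) (simp_all add: grid_class_def)
    show "\<exists>cert. all_accept A V E cert \<and> (\<forall>v\<in>V. length (cert v) \<le> local_complexity c (grid_class ind) n)"
      if "admissible c V E" "grid_class ind V E" "card V = gadget_size m k" for V E
      using short that size by simp
  qed
qed

lemma local_complexity_grid_class_theta:
  assumes c: "c \<ge> 1"
  shows "(\<lambda>n. real (local_complexity c (grid_class ind) n)) \<in> \<Theta>(\<lambda>n. real n)"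
proof (rule bigthetaI'[of "1 / 1000" "real (12 + 2 * c)"])
  show "\<forall>\<^sub>F n in at_top. 1 / 1000 * norm (real n) \<le> norm (real (local_complexity c (grid_class ind) n)) \<and>
      norm (real (local_complexity c (grid_class ind) n)) \<le> real (12 + 2 * c) * norm (real n)"
    unfolding eventually_at_top_linorder
  proof (intro exI allI impI)
    fix n :: nat
    assume n: "n \<ge> 10000"
    define L where "L = local_complexity c (grid_class ind) n"
    define q where "q = n div 30"
    have "q \<le> 16 * L + 16"
      using local_complexity_grid_class_ge[OF c, of n ind] n unfolding L_def q_def by linarith
    moreover have "n < 30 * q + 30"
      unfolding q_def by linarith
    ultimately have "n \<le> 480 * L + 510"
      by linarith
    then have "1 / 1000 * real n \<le> real L"
      using n by simp
    moreover have "real L \<le> real (12 + 2 * c) * real n"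
      using local_complexity_grid_class_le[OF c, of ind n]
      unfolding L_def of_nat_mult[symmetric] of_nat_le_iff .
    ultimately show "1 / 1000 * norm (real n) \<le> norm (real (local_complexity c (grid_class ind) n)) \<and>
      norm (real (local_complexity c (grid_class ind) n)) \<le> real (12 + 2 * c) * norm (real n)"
      by (simp add: L_def)
  qed
qed simp_all

theorem theorem5p7:
  fixes c :: nat
  assumes "c \<ge> 1"
  shows "(\<lambda>n. real (local_complexity c grid_subgraph n)) \<in> \<Theta>(\<lambda>n. real n) \<and>
         (\<lambda>n. real (local_complexity c grid_induced_subgraph n)) \<in> \<Theta>(\<lambda>n. real n)"
  using local_complexity_grid_class_theta[OF assms, of False]
    local_complexity_grid_class_theta[OF assms, of True]
  by (simp add: grid_class_def)

end
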